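(* Let $1<S\le N$, $L$ a band-width vector, $\dot W$ an $L$-admissible matrix, $W_\varepsilon=\mathrm{Id}+\varepsilon\dot W$, $k\in\mathbb N$, $\beta\in\Gamma$, $D_\beta=D_{k,\beta,L}$, $P_{\varepsilon,\beta}=D_\beta W_\varepsilon$ and $\hat P_\beta=D_\beta\hat W_L$. Let $\gamma>0$ be such that $P_{\varepsilon,\beta}$ has $N$ distinct eigenvalues for $0<\varepsilon<\gamma$, and for such $\varepsilon$ let $f^{(1)}_\varepsilon,\dots,f^{(N)}_\varepsilon$ be a unit-norm eigenbasis of $P_{\varepsilon,\beta}$ with eigenvalues $\lambda^{(1)}_\varepsilon,\dots,\lambda^{(N)}_\varepsilon$, labelled so that each $\varepsilon\mapsto\lambda^{(\ell)}_\varepsilon$ is continuous on $(0,\gamma)$ and $\lambda^{(\ell)}_\varepsilon\to e^{-2\pi ik\beta_s}$ as $\varepsilon\to0$ whenever $\ell\in B_s$. Then: (i) there exists an orthonormal eigenbasis $\{f^{(1)},\dots,f^{(N)}\}$ of $\hat P_\beta$ such that $[f^{(\ell)}_\varepsilon]\to[f^{(\ell)}]$ in $\mathbb{CP}^{N-1}$ as $\varepsilon\to0$, i.e. $\min_{\theta\in[0,2\pi)}\|f^{(\ell)}_\varepsilon-e^{i\theta}f^{(\ell)}\|\to0$, for every $\ell$; (ii) for $s\in\{1,\dots,S\}$ and $\ell\in B_s$, letting $\hat\lambda^{(\ell)}$ be the eigenvalue of $\hat P_\beta$ associated with $f^{(\ell)}$, we have $\lambda^{(\ell)}_\varepsilon=e^{-2\pi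 ik\beta_s}+\varepsilon\hat\lambda^{(\ell)}+o(\varepsilon)$ as $\varepsilon\to0$. Moreover, if $\hat\lambda^{(\ell)}\ne0$, then $\arg\hat\lambda^{(\ell)}=\arg\bigl(e^{-2\pi ik\beta_s}\bigr)+\pi$ (mod $2\pi$).
   Context: A band-width vector is $L=(L_1,\dots,L_S)$ of positive integers with $\sum_sL_s=N$; $N_0=0$, $N_s=N_{s-1}+L_s$, $B_s=\{j:N_{s-1}<j\le N_s\}$. $D_{k,\beta,L}$ is the diagonal matrix with $j$-th entry $e^{-2\pi ik\beta_s}$ for $j\in B_s$. $\dot W$ is $L$-admissible if it is real symmetric and (1) $\dot W_{ij}\ge0$ for $i\ne j$, $\sum_j\dot W_{ij}=0$ for all $i$; (2) $\dot W$ has $N$ distinct eigenvalues; (3) each $\hat W_s=(\dot W_{jk})_{j,k\in B_s}$ has $L_s$ distinct eigenvalues. $\hat W_L$ is block diagonal with blocks $\hat W_1,\dots,\hat W_S$. $\Gamma=\{\beta\in\mathbb R^S: e^{-2\pi ik\beta_{s_1}}\neq e^{-2\pi ik\beta_{s_2}}\text{ for all }k\ne0,\ s_1\ne s_2\}$. $\mathbb{CP}^{N-1}$ is the complex projective space, $[v]$ the class of $v\ne0$, with distance $\mathrm{dist}([v],[w])=\min_\theta\|v/\|v\|-e^{i\theta}w/\|w\|\|$. Norms and inner products are the standard ones on $\mathbb C^N$. *)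

theory Defs
  imports "Jordan_Normal_Form.Char_Poly" "HOL-Library.Landau_Symbols"
begin

text \<open>Band-width vectors are lists L of positive naturals; S = length L, N = sum_list L.
  Indices are 0-based: block s (s < S) is the index set {N_s ..< N_(s+1)} with
  N_s = sum_list (take s L).\<close>

definition Npre :: "nat list \<Rightarrow> nat \<Rightarrow> nat" where
  "Npre L s = sum_list (take s L)"

definition block :: "nat list \<Rightarrow> nat \<Rightarrow> nat set" where
  "block L s = {Npre L s ..< Npre L (Suc s)}"

definition bandwidth_vector :: "nat list \<Rightarrow> bool" where
  "bandwidth_vector L \<longleftrightarrow> (\<forall>s < length L. L ! s > 0)"

definition phase :: "int \<Rightarrow> (nat \<Rightarrow> real) \<Rightarrow> nat \<Rightarrow> complex" where
  "phase k \<beta> s = exp (- 2 * of_real pi * \<i> * of_int k * of_real (\<beta> s))"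

definition Dmat :: "int \<Rightarrow> (nat \<Rightarrow> real) \<Rightarrow> nat list \<Rightarrow> complex mat" where
  "Dmat k \<beta> L = mat (sum_list L) (sum_list L)
     (\<lambda>(i,j). if i = j then (\<Sum>s<length L. if i \<in> block L s then phase k \<beta> s else 0) else 0)"

definition Wblock :: "nat list \<Rightarrow> real mat \<Rightarrow> nat \<Rightarrow> real mat" where
  "Wblock L W s = mat (L ! s) (L ! s) (\<lambda>(i,j). W $$ (Npre L s + i, Npre L s + j))"

definition WhatL :: "nat list \<Rightarrow> real mat \<Rightarrow> real mat" where
  "WhatL L W = mat (sum_list L) (sum_list L)
     (\<lambda>(i,j). if \<exists>s < length L. i \<in> block L s \<and> j \<in> block L s then W $$ (i,j) else 0)"

definition admissible :: "nat list \<Rightarrow> real mat \<Rightarrow> bool" where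
  "admissible L W \<longleftrightarrow>
     W \<in> carrier_mat (sum_list L) (sum_list L) \<and> transpose_mat W = W \<and>
     (\<forall>i < sum_list L. \<forall>j < sum_list L. i \<noteq> j \<longrightarrow> W $$ (i,j) \<ge> 0) \<and>
     (\<forall>i < sum_list L. (\<Sum>j < sum_list L. W $$ (i,j)) = 0) \<and>
     card {\<mu>. eigenvalue W \<mu>} = sum_list L \<and>
     (\<forall>s < length L. card {\<mu>. eigenvalue (Wblock L W s) \<mu>} = L ! s)"

definition Gamma :: "nat \<Rightarrow> (nat \<Rightarrow> real) set" where
  "Gamma S = {\<beta>. \<forall>k::int. k \<noteq> 0 \<longrightarrow> (\<forall>s1 < S. \<forall>s2 < S. s1 \<noteq> s2 \<longrightarrow>
                   phase k \<beta> s1 \<noteq> phase k \<beta> s2)}"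

definition vnorm :: "complex vec \<Rightarrow> real" where
  "vnorm v = sqrt (\<Sum>i < dim_vec v. (cmod (v $ i))\<^sup>2)"

definition cp_dist :: "complex vec \<Rightarrow> complex vec \<Rightarrow> real" where
  "cp_dist v w = Inf ((\<lambda>\<theta>. vnorm (complex_of_real (1 / vnorm v) \<cdot>\<^sub>v v
                      - (exp (\<i> * of_real \<theta>) * complex_of_real (1 / vnorm w)) \<cdot>\<^sub>v w)) ` {0..<2*pi})"

end

theory Submission
  imports Defs
begin

text \<open>As \<open>\<epsilon> \<rightarrow> 0\<close>, \<open>P\<^sub>\<epsilon> = D (I + \<epsilon> W)\<close> tends to the diagonal matrix \<open>D\<close>, whose
  eigenspaces are spanned by the blocks \<open>B\<^sub>s\<close>. An eigenvector whose eigenvalue tends to the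
  phase \<open>d\<^sub>s\<close> of block \<open>s\<close> concentrates on \<open>B\<^sub>s\<close>: on another block the
  eigen-equation reads \<open>(\<lambda> - d\<^sub>t) f\<^sub>i = O(\<epsilon>)\<close> with \<open>d\<^sub>t \<noteq> d\<^sub>s\<close>. Dividing the
  eigen-equation on \<open>B\<^sub>s\<close> by \<open>\<epsilon> d\<^sub>s\<close> shows that the restriction of \<open>f\<^sub>\<epsilon>\<close> is an
  approximate eigenvector of the real symmetric block \<open>W\<^sub>s\<close>, with approximate eigenvalue
  \<open>\<kappa>\<^sub>\<epsilon> = (\<lambda>\<^sub>\<epsilon> - d\<^sub>s) / (\<epsilon> d\<^sub>s)\<close>. As \<open>\<kappa>\<close> is continuous and \<open>W\<^sub>s\<close> has simple
  spectrum, \<open>\<kappa>\<^sub>\<epsilon>\<close> converges to one eigenvalue \<open>\<nu>\<close> of \<open>W\<^sub>s\<close> and the restriction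
  aligns, up to a phase, with the corresponding unit eigenvector. Two eigenvectors from the same
  block pick different eigenvectors of \<open>W\<^sub>s\<close>, because eigenvectors of \<open>D (I + \<epsilon> W)\<close> are
  orthogonal for the bilinear form weighted by \<open>D\<close> inverse. Finally \<open>\<nu> \<le> 0\<close> by Gershgorin, as
  \<open>W\<close> has nonnegative off-diagonal entries and zero row sums; so \<open>\<lambda>\<^sub>\<epsilon> = d\<^sub>s + \<epsilon> d\<^sub>s \<nu> + o(\<epsilon>)\<close>
  and \<open>d\<^sub>s \<nu>\<close> points opposite to \<open>d\<^sub>s\<close>.\<close>

lemma Npre_0 [simp]: "Npre L 0 = 0"
  by (simp add: Npre_def)

lemma Npre_Suc: "Npre L (Suc t) = Npre L t + (if t < length L then L ! t else 0)"
  unfolding Npre_def by (auto simp: take_Suc_conv_app_nth)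

lemma Npre_mono: "s \<le> t \<Longrightarrow> Npre L s \<le> Npre L t"
  by (rule lift_Suc_mono_le[of "Npre L"]) (auto simp: Npre_Suc)

lemma Npre_length: "Npre L (length L) = sum_list L"
  by (simp add: Npre_def)

lemma ex_block_below_Npre: "i < Npre L m \<Longrightarrow> \<exists>s<m. i \<in> block L s"
proof (induction m)
  case 0
  then show ?case by simp
next
  case (Suc m)
  show ?case
  proof (cases "i < Npre L m")
    case True
    then show ?thesis using Suc.IH by (meson less_SucI)
  next
    case False
    then show ?thesis using Suc.prems by (intro exI[of _ m]) (auto simp: block_def)
  qed
qed

lemma ex_block: "i < sum_list L \<Longrightarrow> \<exists>s<length L. i \<in> block L s"
  using ex_block_below_Npre[of i L "length L"] by (simp add: Npre_length)

lemma block_unique: "i \<in> block L s \<Longrightarrow> i \<in> block L t \<Longrightarrow> s = t"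
proof (induction s t rule: linorder_wlog)
  case (le s t)
  show ?case
  proof (rule ccontr)
    assume "s \<noteq> t"
    then show False using le Npre_mono[of "Suc s" t L] by (auto simp: block_def)
  qed
qed auto

lemma block_eq_atLeastLessThan: "s < length L \<Longrightarrow> block L s = {Npre L s ..< Npre L s + L ! s}"
  by (simp add: block_def Npre_Suc)

lemma block_subset_lessThan: "s < length L \<Longrightarrow> block L s \<subseteq> {..<sum_list L}"
  using Npre_mono[of "Suc s" "length L" L] by (auto simp: block_def Npre_length)

lemma Npre_add_in_block: "s < length L \<Longrightarrow> j < L ! s \<Longrightarrow> Npre L s + j \<in> block L s"
  by (simp add: block_eq_atLeastLessThan)

lemma Npre_add_less: "s < length L \<Longrightarrow> j < L ! s \<Longrightarrow> Npre L s + j < sum_list L"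
  using Npre_add_in_block block_subset_lessThan by blast

lemma block_eq_image:
  assumes "s < length L"
  shows "block L s = (\<lambda>j. Npre L s + j) ` {..<L ! s}"
proof -
  have "x \<in> (\<lambda>j. Npre L s + j) ` {..<L ! s}" if "Npre L s \<le> x" "x < Npre L s + L ! s" for x
    using that by (intro image_eqI[of _ _ "x - Npre L s"]) auto
  then show ?thesis using assms by (auto simp: block_eq_atLeastLessThan)
qed

lemma sum_lessThan_split_block:
  assumes "s < length L"
  shows "(\<Sum>i<sum_list L. h i) = (\<Sum>j<L ! s. h (Npre L s + j)) + (\<Sum>i\<in>{..<sum_list L} - block L s. h i)"
proof -
  have "(\<Sum>i<sum_list L. h i) = (\<Sum>i\<in>block L s. h i) + (\<Sum>i\<in>{..<sum_list L} - block L s. h i)"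
    using block_subset_lessThan[OF assms] sum.subset_diff[of "block L s" "{..<sum_list L}" h]
    by (simp add: add.commute)
  also have "(\<Sum>i\<in>block L s. h i) = (\<Sum>j<L ! s. h (Npre L s + j))"
    unfolding block_eq_image[OF assms] by (subst sum.reindex) (auto simp: inj_on_def)
  finally show ?thesis .
qed

definition block_of :: "nat list \<Rightarrow> nat \<Rightarrow> nat" where
  "block_of L i = (THE s. s < length L \<and> i \<in> block L s)"

lemma block_of: "i < sum_list L \<Longrightarrow> block_of L i < length L \<and> i \<in> block L (block_of L i)"
  unfolding block_of_def by (rule theI') (use ex_block block_unique in blast)

lemma block_of_eq: "i \<in> block L s \<Longrightarrow> s < length L \<Longrightarrow> block_of L i = s"
  using block_of block_subset_lessThan block_unique by (metis lessThan_iff subsetD)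


lemma norm_phase [simp]: "cmod (phase k \<beta> s) = 1"
proof -
  have "phase k \<beta> s = cis (- 2 * pi * k * \<beta> s)"
    unfolding phase_def cis_conv_exp by (simp add: algebra_simps)
  then show ?thesis by simp
qed

lemma phase_nonzero [simp]: "phase k \<beta> s \<noteq> 0"
  by (metis norm_phase norm_zero zero_neq_one)

lemma Dmat_index:
  assumes "i < sum_list L" "j < sum_list L"
  shows "Dmat k \<beta> L $$ (i,j) = (if i = j then phase k \<beta> (block_of L i) else 0)"
proof -
  have "(\<Sum>t<length L. if i \<in> block L t then phase k \<beta> t else 0)
      = (\<Sum>t<length L. if t = block_of L i then phase k \<beta> t else 0)"
    using block_of[OF assms(1)] block_unique by (intro sum.cong) auto
  then show ?thesis using assms block_of[OF assms(1)] by (auto simp: Dmat_def)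
qed

lemma Dmat_mult_mat_vec_index:
  fixes M :: "complex mat"
  assumes M: "M \<in> carrier_mat (sum_list L) (sum_list L)" and x: "x \<in> carrier_vec (sum_list L)"
    and i: "i < sum_list L"
  shows "((Dmat k \<beta> L * M) *\<^sub>v x) $ i = phase k \<beta> (block_of L i) * (\<Sum>j<sum_list L. M $$ (i,j) * x $ j)"
proof -
  let ?N = "sum_list L"
  have e: "(Dmat k \<beta> L * M) $$ (i,j) = phase k \<beta> (block_of L i) * M $$ (i,j)" if j: "j < ?N" for j
  proof -
    have "(Dmat k \<beta> L * M) $$ (i,j) = (\<Sum>m<?N. Dmat k \<beta> L $$ (i,m) * M $$ (m,j))"
      using M i j by (simp add: Dmat_def scalar_prod_def lessThan_atLeast0)
    also have "\<dots> = (\<Sum>m<?N. if m = i then phase k \<beta> (block_of L i) * M $$ (m,j) else 0)"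
      using i by (intro sum.cong) (auto simp: Dmat_index)
    finally show ?thesis using i by simp
  qed
  have "((Dmat k \<beta> L * M) *\<^sub>v x) $ i = (\<Sum>j<?N. (Dmat k \<beta> L * M) $$ (i,j) * x $ j)"
    using M i x by (simp add: Dmat_def scalar_prod_def lessThan_atLeast0)
  also have "\<dots> = (\<Sum>j<?N. phase k \<beta> (block_of L i) * (M $$ (i,j) * x $ j))"
    by (intro sum.cong) (auto simp: e)
  finally show ?thesis by (simp add: sum_distrib_left)
qed

lemma Dmat_perturbation_mult_mat_vec_index:
  fixes W :: "real mat"
  assumes W: "W \<in> carrier_mat (sum_list L) (sum_list L)" and x: "x \<in> carrier_vec (sum_list L)"
    and i: "i < sum_list L"
  shows "((Dmat k \<beta> L * (1\<^sub>m (sum_list L) + complex_of_real e \<cdot>\<^sub>m map_mat complex_of_real W)) *\<^sub>v x) $ i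
     = phase k \<beta> (block_of L i) *
         (x $ i + complex_of_real e * (\<Sum>j<sum_list L. complex_of_real (W $$ (i,j)) * x $ j))"
proof -
  let ?N = "sum_list L"
  have "(\<Sum>j<?N. (1\<^sub>m ?N + complex_of_real e \<cdot>\<^sub>m map_mat complex_of_real W) $$ (i,j) * x $ j)
      = (\<Sum>j<?N. (if i = j then x $ j else 0) + complex_of_real e * (complex_of_real (W $$ (i,j)) * x $ j))"
    using W i by (intro sum.cong) (auto simp: algebra_simps)
  also have "\<dots> = x $ i + complex_of_real e * (\<Sum>j<?N. complex_of_real (W $$ (i,j)) * x $ j)"
    using i by (simp add: sum.distrib sum_distrib_left)
  finally show ?thesis using W x i by (subst Dmat_mult_mat_vec_index) auto
qed

section \<open>Real symmetric matrices with simple spectrum\<close>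

text \<open>\<open>r q\<close> (\<open>q < n\<close>) is the \<open>q\<close>-th vector of an orthonormal eigenbasis of the real matrix
  \<open>(a i j)\<close>, with pairwise distinct eigenvalues \<open>\<nu> q\<close>; the last clause expresses completeness.\<close>
definition orthonormal_eigensystem ::
    "nat \<Rightarrow> (nat \<Rightarrow> nat \<Rightarrow> real) \<Rightarrow> (nat \<Rightarrow> real) \<Rightarrow> (nat \<Rightarrow> nat \<Rightarrow> real) \<Rightarrow> bool" where
  "orthonormal_eigensystem n a \<nu> r \<longleftrightarrow> inj_on \<nu> {..<n} \<and>
     (\<forall>q<n. \<forall>i<n. (\<Sum>j<n. a i j * r q j) = \<nu> q * r q i) \<and>
     (\<forall>q<n. \<forall>p<n. (\<Sum>j<n. r q j * r p j) = (if q = p then 1 else 0)) \<and>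
     (\<forall>i<n. \<forall>j<n. (\<Sum>q<n. r q i * r q j) = (if i = j then 1 else 0))"

lemma orthonormal_rows_imp_orthonormal_columns:
  fixes r :: "nat \<Rightarrow> nat \<Rightarrow> real"
  assumes "\<forall>q<n. \<forall>p<n. (\<Sum>j<n. r q j * r p j) = (if q = p then 1 else 0)"
  shows "\<forall>i<n. \<forall>j<n. (\<Sum>q<n. r q i * r q j) = (if i = j then 1 else 0)"
proof (intro allI impI)
  fix i j assume ij: "i < n" "j < n"
  define R where "R = mat n n (\<lambda>(j,q). r q j)"
  have R: "R \<in> carrier_mat n n" "transpose_mat R \<in> carrier_mat n n" by (auto simp: R_def)
  have "transpose_mat R * R = 1\<^sub>m n"
    using assms by (intro eq_matI) (auto simp: R_def scalar_prod_def atLeast0LessThan)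
  then have "R * transpose_mat R = 1\<^sub>m n" using mat_mult_left_right_inverse[OF R(2) R(1)] by auto
  moreover have "(R * transpose_mat R) $$ (i,j) = (\<Sum>q<n. r q i * r q j)"
    using ij by (simp add: R_def scalar_prod_def lessThan_atLeast0)
  ultimately show "(\<Sum>q<n. r q i * r q j) = (if i = j then 1 else 0)" using ij by simp
qed

lemma symmetric_eigenvectors_orthogonal:
  fixes a :: "nat \<Rightarrow> nat \<Rightarrow> real"
  assumes sym: "\<And>i j. i < n \<Longrightarrow> j < n \<Longrightarrow> a i j = a j i"
    and x: "\<And>i. i < n \<Longrightarrow> (\<Sum>j<n. a i j * x j) = \<mu> * x i"
    and y: "\<And>i. i < n \<Longrightarrow> (\<Sum>j<n. a i j * y j) = \<nu> * y i"
    and "\<mu> \<noteq> \<nu>"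
  shows "(\<Sum>j<n. x j * y j) = 0"
proof -
  have "\<mu> * (\<Sum>j<n. x j * y j) = (\<Sum>j<n. (\<Sum>i<n. a j i * x i) * y j)"
    using x by (simp add: sum_distrib_left mult.assoc)
  also have "\<dots> = (\<Sum>i<n. \<Sum>j<n. a j i * x i * y j)"
    by (simp add: sum_distrib_right) (rule sum.swap)
  also have "\<dots> = (\<Sum>i<n. x i * (\<Sum>j<n. a i j * y j))"
    using sym by (auto simp: sum_distrib_left mult_ac intro!: sum.cong)
  also have "\<dots> = \<nu> * (\<Sum>j<n. x j * y j)"
    using y by (simp add: sum_distrib_left mult_ac)
  finally have "(\<mu> - \<nu>) * (\<Sum>j<n. x j * y j) = 0" by (simp add: algebra_simps)
  then show ?thesis using assms(4) by simp
qed

lemma orthonormal_eigensystem_exists: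
  fixes A :: "real mat"
  assumes A: "A \<in> carrier_mat n n" and sym: "\<And>i j. i < n \<Longrightarrow> j < n \<Longrightarrow> A $$ (i,j) = A $$ (j,i)"
    and card: "card {\<mu>. eigenvalue A \<mu>} = n"
  shows "\<exists>\<nu> r. orthonormal_eigensystem n (\<lambda>i j. A $$ (i,j)) \<nu> r"
proof (cases "n = 0")
  case True
  then show ?thesis by (simp add: orthonormal_eigensystem_def)
next
  case False
  have "finite {\<mu>. eigenvalue A \<mu>}" using card False card.infinite by fastforce
  then obtain \<nu> where \<nu>: "bij_betw \<nu> {..<n} {\<mu>. eigenvalue A \<mu>}"
    using ex_bij_betw_nat_finite card by (metis atLeast0LessThan)
  define v where "v q = (SOME v. eigenvector A v (\<nu> q))" for q
  have v: "v q \<in> carrier_vec n" "v q \<noteq> 0\<^sub>v n" "A *\<^sub>v v q = \<nu> q \<cdot>\<^sub>v v q" if "q < n" for q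
  proof -
    have "eigenvalue A (\<nu> q)" using \<nu> that by (auto simp: bij_betw_def)
    then have "eigenvector A (v q) (\<nu> q)" unfolding v_def eigenvalue_def by (rule someI_ex)
    then show "v q \<in> carrier_vec n" "v q \<noteq> 0\<^sub>v n" "A *\<^sub>v v q = \<nu> q \<cdot>\<^sub>v v q"
      using A by (auto simp: eigenvector_def)
  qed
  define nr where "nr q = sqrt (\<Sum>j<n. (v q $ j)\<^sup>2)" for q
  have nr: "nr q > 0" if q: "q < n" for q
  proof -
    obtain j where "j < n" "v q $ j \<noteq> 0"
      using v[OF q] by (metis carrier_vecD eq_vecI index_zero_vec(1,2))
    then have "(\<Sum>j<n. (v q $ j)\<^sup>2) > 0" by (intro sum_pos2[of _ j]) auto
    then show ?thesis by (simp add: nr_def)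
  qed
  define r where "r q j = v q $ j / nr q" for q j
  have eig: "(\<Sum>j<n. A $$ (i,j) * r q j) = \<nu> q * r q i" if "q < n" "i < n" for q i
  proof -
    have "(A *\<^sub>v v q) $ i = (\<Sum>j<n. A $$ (i,j) * v q $ j)"
      using A v(1)[OF that(1)] that by (simp add: scalar_prod_def lessThan_atLeast0)
    then have "(\<Sum>j<n. A $$ (i,j) * v q $ j) = \<nu> q * v q $ i"
      using v[OF that(1)] that by simp
    then show ?thesis
      unfolding r_def by (simp add: sum_divide_distrib[symmetric] times_divide_eq_right)
  qed
  have unit: "(\<Sum>j<n. r q j * r q j) = 1" if "q < n" for q
  proof -
    have "(\<Sum>j<n. r q j * r q j) = (\<Sum>j<n. (v q $ j)\<^sup>2) / (nr q)\<^sup>2"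
      unfolding r_def by (simp add: sum_divide_distrib power2_eq_square)
    also have "(nr q)\<^sup>2 = (\<Sum>j<n. (v q $ j)\<^sup>2)" unfolding nr_def by (simp add: sum_nonneg)
    finally show ?thesis using nr[OF that] by (simp add: nr_def)
  qed
  have "inj_on \<nu> {..<n}" using \<nu> by (simp add: bij_betw_def)
  then have orth: "(\<Sum>j<n. r q j * r p j) = 0" if "q < n" "p < n" "q \<noteq> p" for q p
    using that by (intro symmetric_eigenvectors_orthogonal[of n "\<lambda>i j. A $$ (i,j)"])
      (auto simp: sym eig inj_on_def)
  have "\<forall>q<n. \<forall>p<n. (\<Sum>j<n. r q j * r p j) = (if q = p then 1 else 0)"
    using orth unit by auto
  then show ?thesis
    using \<open>inj_on \<nu> {..<n}\<close> eig orthonormal_rows_imp_orthonormal_columns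
    unfolding orthonormal_eigensystem_def by blast
qed

lemma parseval:
  fixes r :: "nat \<Rightarrow> nat \<Rightarrow> real" and x :: "nat \<Rightarrow> complex"
  assumes complete: "\<forall>i<n. \<forall>j<n. (\<Sum>q<n. r q i * r q j) = (if i = j then 1 else 0)"
  shows "(\<Sum>p<n. (cmod (\<Sum>j<n. complex_of_real (r p j) * x j))\<^sup>2) = (\<Sum>j<n. (cmod (x j))\<^sup>2)"
proof -
  have "complex_of_real (\<Sum>p<n. (cmod (\<Sum>j<n. complex_of_real (r p j) * x j))\<^sup>2)
     = (\<Sum>p<n. (\<Sum>j<n. complex_of_real (r p j) * x j) * (\<Sum>i<n. complex_of_real (r p i) * cnj (x i)))"
    by (simp only: of_real_sum complex_norm_square) (simp add: cnj_sum)
  also have "\<dots> = (\<Sum>p<n. \<Sum>j<n. \<Sum>i<n. complex_of_real (r p j * r p i) * (x j * cnj (x i)))"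
    by (simp add: sum_product mult_ac)
  also have "\<dots> = (\<Sum>j<n. \<Sum>i<n. \<Sum>p<n. complex_of_real (r p j * r p i) * (x j * cnj (x i)))"
    by (subst sum.swap) (subst (2) sum.swap, rule refl)
  also have "\<dots> = (\<Sum>j<n. \<Sum>i<n. complex_of_real (\<Sum>p<n. r p j * r p i) * (x j * cnj (x i)))"
    by (simp add: sum_distrib_right)
  also have "\<dots> = (\<Sum>j<n. \<Sum>i<n. (if j = i then x j * cnj (x i) else 0))"
    using complete by (intro sum.cong refl) auto
  also have "\<dots> = (\<Sum>j<n. x j * cnj (x j))" by simp
  also have "\<dots> = complex_of_real (\<Sum>j<n. (cmod (x j))\<^sup>2)"
    by (simp only: of_real_sum complex_norm_square)
  finally show ?thesis using of_real_eq_iff by blast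
qed

lemma orthonormal_eigensystem_residual:
  fixes u :: "nat \<Rightarrow> complex"
  assumes sys: "orthonormal_eigensystem n a \<nu> r"
    and sym: "\<And>i j. i < n \<Longrightarrow> j < n \<Longrightarrow> a i j = a j i"
  shows "(\<Sum>j<n. (cmod ((\<Sum>j'<n. complex_of_real (a j j') * u j') - \<kappa> * u j))\<^sup>2)
       = (\<Sum>p<n. (cmod (complex_of_real (\<nu> p) - \<kappa>))\<^sup>2 *
                 (cmod (\<Sum>j<n. complex_of_real (r p j) * u j))\<^sup>2)"
proof -
  have eig: "\<And>q i. q < n \<Longrightarrow> i < n \<Longrightarrow> (\<Sum>j<n. a i j * r q j) = \<nu> q * r q i"
    and complete: "\<forall>i<n. \<forall>j<n. (\<Sum>q<n. r q i * r q j) = (if i = j then 1 else 0)"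
    using sys by (auto simp: orthonormal_eigensystem_def)
  have coeff: "(\<Sum>j<n. complex_of_real (r p j) *
                  ((\<Sum>j'<n. complex_of_real (a j j') * u j') - \<kappa> * u j))
      = (complex_of_real (\<nu> p) - \<kappa>) * (\<Sum>j<n. complex_of_real (r p j) * u j)" if p: "p < n" for p
  proof -
    have "(\<Sum>j<n. complex_of_real (r p j) * (\<Sum>j'<n. complex_of_real (a j j') * u j'))
        = (\<Sum>j<n. \<Sum>j'<n. complex_of_real (r p j * a j j') * u j')"
      by (simp add: sum_distrib_left mult.assoc)
    also have "\<dots> = (\<Sum>j'<n. \<Sum>j<n. complex_of_real (a j' j * r p j) * u j')"
      by (subst sum.swap) (use sym in \<open>auto intro!: sum.cong simp: mult.commute\<close>)
    also have "\<dots> = (\<Sum>j'<n. complex_of_real (\<Sum>j<n. a j' j * r p j) * u j')"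
      by (simp add: sum_distrib_right)
    also have "\<dots> = (\<Sum>j'<n. complex_of_real (\<nu> p) * (complex_of_real (r p j') * u j'))"
      using eig p by (intro sum.cong) auto
    also have "\<dots> = complex_of_real (\<nu> p) * (\<Sum>j<n. complex_of_real (r p j) * u j)"
      by (simp add: sum_distrib_left)
    finally show ?thesis
      by (simp add: right_diff_distrib sum_subtractf left_diff_distrib sum_distrib_left mult_ac)
  qed
  have "(\<Sum>j<n. (cmod ((\<Sum>j'<n. complex_of_real (a j j') * u j') - \<kappa> * u j))\<^sup>2)
      = (\<Sum>p<n. (cmod (\<Sum>j<n. complex_of_real (r p j) *
                   ((\<Sum>j'<n. complex_of_real (a j j') * u j') - \<kappa> * u j)))\<^sup>2)"
    using parseval[OF complete] by simp
  also have "\<dots> = (\<Sum>p<n. (cmod (complex_of_real (\<nu> p) - \<kappa>))\<^sup>2 *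
                 (cmod (\<Sum>j<n. complex_of_real (r p j) * u j))\<^sup>2)"
    by (intro sum.cong) (auto simp: coeff norm_mult power_mult_distrib)
  finally show ?thesis .
qed

text \<open>Gershgorin's disc theorem, for a principal submatrix of a matrix with nonnegative
  off-diagonal entries and zero row sums.\<close>
lemma principal_submatrix_eigenvalue_nonpos:
  fixes W :: "real mat" and x :: "nat \<Rightarrow> real"
  assumes offdiag: "\<And>i j. i < N \<Longrightarrow> j < N \<Longrightarrow> i \<noteq> j \<Longrightarrow> W $$ (i,j) \<ge> 0"
    and rows: "\<And>i. i < N \<Longrightarrow> (\<Sum>j<N. W $$ (i,j)) = 0"
    and sub: "a + n \<le> N"
    and eig: "\<And>i. i < n \<Longrightarrow> (\<Sum>j<n. W $$ (a + i, a + j) * x j) = \<mu> * x i"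
    and nz: "\<exists>j<n. x j \<noteq> 0"
  shows "\<mu> \<le> 0"
proof -
  define M where "M = Max ((\<lambda>j. \<bar>x j\<bar>) ` {..<n})"
  have "M \<in> (\<lambda>j. \<bar>x j\<bar>) ` {..<n}" unfolding M_def using nz by (intro Max_in) auto
  then obtain i where i: "i < n" "\<bar>x i\<bar> = M" by auto
  have M_ge: "\<bar>x j\<bar> \<le> M" if "j < n" for j unfolding M_def using that by (intro Max_ge) auto
  have "M > 0"
  proof -
    obtain j where "j < n" "x j \<noteq> 0" using nz by blast
    then show ?thesis using M_ge[of j] by linarith
  qed
  define I where "I = a + i"
  have I: "I < N" using i sub by (simp add: I_def)
  let ?J = "{..<n} - {i}"
  have "(\<Sum>j\<in>?J. W $$ (I, a + j)) = (\<Sum>m\<in>(\<lambda>j. a + j) ` ?J. W $$ (I, m))"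
    by (subst sum.reindex) (auto simp: inj_on_def)
  also have "\<dots> \<le> (\<Sum>m\<in>{..<N} - {I}. W $$ (I, m))"
    using sub offdiag I by (intro sum_mono2) (auto simp: I_def)
  also have "\<dots> = - W $$ (I,I)"
    using rows[OF I] I by (simp add: sum.remove[of "{..<N}" I])
  finally have off_le: "(\<Sum>j\<in>?J. W $$ (I, a + j)) \<le> - W $$ (I,I)" .
  have "(\<mu> - W $$ (I,I)) * x i = (\<Sum>j\<in>?J. W $$ (I, a + j) * x j)"
    using eig[OF i(1)] i(1) by (simp add: I_def sum.remove[of "{..<n}" i] algebra_simps)
  then have "\<bar>\<mu> - W $$ (I,I)\<bar> * M = \<bar>\<Sum>j\<in>?J. W $$ (I, a + j) * x j\<bar>"
    using i by (metis abs_mult)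
  also have "\<dots> \<le> (\<Sum>j\<in>?J. \<bar>W $$ (I, a + j) * x j\<bar>)" by (rule sum_abs)
  also have "\<dots> \<le> (\<Sum>j\<in>?J. W $$ (I, a + j) * M)"
    using offdiag I sub M_ge by (intro sum_mono) (auto simp: abs_mult I_def intro!: mult_left_mono)
  also have "\<dots> \<le> - W $$ (I,I) * M"
    using mult_right_mono[OF off_le, of M] \<open>M > 0\<close> by (simp add: sum_distrib_right[symmetric])
  finally have "\<bar>\<mu> - W $$ (I,I)\<bar> * M \<le> (- W $$ (I,I)) * M" by simp
  then have "\<bar>\<mu> - W $$ (I,I)\<bar> \<le> - W $$ (I,I)" using \<open>M > 0\<close> mult_le_cancel_right_pos by blast
  then show ?thesis by linarith
qed

section \<open>Approximate eigenvectors\<close>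

lemma tendsto_sum_power2_norm_zero:
  fixes f :: "'b \<Rightarrow> 'i \<Rightarrow> 'a::real_normed_vector"
  assumes "\<And>j. j \<in> I \<Longrightarrow> ((\<lambda>\<epsilon>. f \<epsilon> j) \<longlongrightarrow> 0) F"
  shows "((\<lambda>\<epsilon>. \<Sum>j\<in>I. (norm (f \<epsilon> j))\<^sup>2) \<longlongrightarrow> 0) F"
proof (rule tendsto_null_sum)
  fix j assume "j \<in> I"
  from tendsto_power[OF tendsto_norm_zero[OF assms[OF this]], of 2]
  show "((\<lambda>\<epsilon>. (norm (f \<epsilon> j))\<^sup>2) \<longlongrightarrow> 0) F" by simp
qed

lemma tendsto_norm_zero_of_sum_power2:
  fixes f :: "'b \<Rightarrow> nat \<Rightarrow> 'a::real_normed_vector"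
  assumes lim: "((\<lambda>\<epsilon>. \<Sum>j<n. (norm (f \<epsilon> j))\<^sup>2) \<longlongrightarrow> 0) F" and j: "j < n"
  shows "((\<lambda>\<epsilon>. f \<epsilon> j) \<longlongrightarrow> 0) F"
proof -
  have "((\<lambda>\<epsilon>. sqrt (\<Sum>j<n. (norm (f \<epsilon> j))\<^sup>2)) \<longlongrightarrow> 0) F"
    using tendsto_real_sqrt[OF lim] by simp
  moreover
  have "norm (f \<epsilon> j) \<le> norm (sqrt (\<Sum>j<n. (norm (f \<epsilon> j))\<^sup>2)) * 1" for \<epsilon>
  proof -
    have "(norm (f \<epsilon> j))\<^sup>2 \<le> (\<Sum>j<n. (norm (f \<epsilon> j))\<^sup>2)"
      using j by (intro member_le_sum) auto
    then show ?thesis by (simp add: real_le_rsqrt sum_nonneg)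
  qed
  then have "eventually (\<lambda>\<epsilon>. norm (f \<epsilon> j) \<le> norm (sqrt (\<Sum>j<n. (norm (f \<epsilon> j))\<^sup>2)) * 1) F"
    by simp
  ultimately show ?thesis by (rule tendsto_0_le)
qed

lemma ex_uniform_separation:
  fixes \<nu> :: "nat \<Rightarrow> 'a::metric_space"
  assumes "inj_on \<nu> {..<n}"
  obtains \<delta> where "\<delta> > 0" "\<And>p q. p < n \<Longrightarrow> q < n \<Longrightarrow> p \<noteq> q \<Longrightarrow> \<delta> \<le> dist (\<nu> p) (\<nu> q)"
proof -
  define X where "X = insert 1 ((\<lambda>(p,q). dist (\<nu> p) (\<nu> q)) ` ({..<n} \<times> {..<n} - {(p,q). p = q}))"
  have fin: "finite X" unfolding X_def by auto
  have pos: "\<forall>x\<in>X. x > 0" unfolding X_def using assms by (auto simp: inj_on_def)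
  have "Min X \<in> X" using fin by (intro Min_in) (auto simp: X_def)
  then have "Min X > 0" using pos by auto
  moreover have "Min X \<le> dist (\<nu> p) (\<nu> q)" if "p < n" "q < n" "p \<noteq> q" for p q
    using fin that by (intro Min_le) (auto simp: X_def)
  ultimately show ?thesis using that by blast
qed

lemma continuous_stays_below_gap:
  fixes h :: "real \<Rightarrow> real"
  assumes cont: "continuous_on {a<..<b} h"
    and gap: "\<And>x. x \<in> {a<..<b} \<Longrightarrow> h x < c \<or> d \<le> h x" and "c < d"
    and x0: "x0 \<in> {a<..<b}" "h x0 < c" and x: "x \<in> {a<..<b}"
  shows "h x < c"
proof (rule ccontr)
  assume "\<not> h x < c"
  then have hx: "d \<le> h x" using gap x by auto
  define m where "m = (c + d) / 2"
  have m: "h x0 \<le> m" "m \<le> h x" "c \<le> m" "m < d" using x0 hx \<open>c < d\<close> by (auto simp: m_def)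
  have sub: "continuous_on {y..z} h" if "y \<in> {a<..<b}" "z \<in> {a<..<b}" for y z
    using cont by (rule continuous_on_subset) (use that in auto)
  have "\<exists>y. min x0 x \<le> y \<and> y \<le> max x0 x \<and> h y = m"
  proof (cases "x0 \<le> x")
    case True
    then show ?thesis using IVT'[of h x0 m x] m sub[OF x0(1) x] by auto
  next
    case False
    then show ?thesis using IVT2'[of h x0 m x] m sub[OF x x0(1)] by auto
  qed
  then obtain y where "min x0 x \<le> y" "y \<le> max x0 x" "h y = m" by blast
  moreover have "y \<in> {a<..<b}" using calculation x0(1) x by auto
  ultimately show False using gap[of y] m by auto
qed

text \<open>Near 0, \<open>\<kappa>\<close> stays within \<open>\<delta>/3\<close> of the finite set, whose points are \<open>\<delta>\<close> apart; by the
  intermediate value theorem it cannot move from one \<open>\<delta>/3\<close>-ball to another.\<close>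
lemma continuous_tendsto_point_of_finite_set:
  fixes \<kappa> :: "real \<Rightarrow> 'a::metric_space" and \<nu> :: "nat \<Rightarrow> 'a"
  assumes inj: "inj_on \<nu> {..<n}" and \<gamma>: "\<gamma> > 0" and cont: "continuous_on {0<..<\<gamma>} \<kappa>"
    and near: "\<And>\<eta>. \<eta> > 0 \<Longrightarrow> eventually (\<lambda>\<epsilon>. \<exists>p<n. dist (\<kappa> \<epsilon>) (\<nu> p) < \<eta>) (at_right 0)"
  shows "\<exists>q<n. (\<kappa> \<longlongrightarrow> \<nu> q) (at_right 0)"
proof -
  obtain \<delta> where \<delta>: "\<delta> > 0" and sep: "\<And>p q. p < n \<Longrightarrow> q < n \<Longrightarrow> p \<noteq> q \<Longrightarrow> \<delta> \<le> dist (\<nu> p) (\<nu> q)"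
    using ex_uniform_separation[OF inj] by blast
  have far: "\<delta> \<le> dist x (\<nu> p) + dist x (\<nu> q)" if "p < n" "q < n" "p \<noteq> q" for p q x
    using sep[OF that] dist_triangle3[of "\<nu> p" "\<nu> q" x] by linarith
  obtain b0 where "b0 > 0" and b0: "\<And>\<epsilon>. 0 < \<epsilon> \<Longrightarrow> \<epsilon> < b0 \<Longrightarrow> \<exists>p<n. dist (\<kappa> \<epsilon>) (\<nu> p) < \<delta>/3"
    using near[of "\<delta>/3"] \<delta> unfolding eventually_at_right_field by auto
  define b where "b = min b0 \<gamma>"
  have b: "0 < b" "b \<le> \<gamma>" and close: "\<And>\<epsilon>. 0 < \<epsilon> \<Longrightarrow> \<epsilon> < b \<Longrightarrow> \<exists>p<n. dist (\<kappa> \<epsilon>) (\<nu> p) < \<delta>/3"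
    using \<open>b0 > 0\<close> \<gamma> b0 by (auto simp: b_def)
  obtain q where q: "q < n" "dist (\<kappa> (b/2)) (\<nu> q) < \<delta>/3" using close[of "b/2"] b by auto
  have stay: "dist (\<kappa> \<epsilon>) (\<nu> q) < \<delta>/3" if "\<epsilon> \<in> {0<..<b}" for \<epsilon>
  proof (rule continuous_stays_below_gap[of 0 b "\<lambda>\<epsilon>. dist (\<kappa> \<epsilon>) (\<nu> q)" "\<delta>/3" "2*\<delta>/3" "b/2"])
    show "continuous_on {0<..<b} (\<lambda>\<epsilon>. dist (\<kappa> \<epsilon>) (\<nu> q))"
      by (intro continuous_intros continuous_on_subset[OF cont]) (use b in auto)
    show "dist (\<kappa> x) (\<nu> q) < \<delta>/3 \<or> 2*\<delta>/3 \<le> dist (\<kappa> x) (\<nu> q)" if x: "x \<in> {0<..<b}" for x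
    proof -
      obtain p where p: "p < n" "dist (\<kappa> x) (\<nu> p) < \<delta>/3" using close x by auto
      then show ?thesis using far[of p q "\<kappa> x"] q by (cases "p = q") auto
    qed
  qed (use that q \<delta> b in auto)
  have "(\<kappa> \<longlongrightarrow> \<nu> q) (at_right 0)"
    unfolding tendsto_iff
  proof (intro allI impI)
    fix e :: real assume "e > 0"
    have "eventually (\<lambda>\<epsilon>. \<epsilon> \<in> {0<..<b}) (at_right (0::real))"
      using b unfolding eventually_at_right_field by auto
    moreover have "eventually (\<lambda>\<epsilon>. \<exists>p<n. dist (\<kappa> \<epsilon>) (\<nu> p) < min e (\<delta>/3)) (at_right 0)"
      using \<open>e > 0\<close> \<delta> by (intro near) simp
    ultimately show "eventually (\<lambda>\<epsilon>. dist (\<kappa> \<epsilon>) (\<nu> q) < e) (at_right 0)"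
    proof eventually_elim
      case (elim \<epsilon>)
      then obtain p where p: "p < n" "dist (\<kappa> \<epsilon>) (\<nu> p) < min e (\<delta>/3)" by auto
      have "p = q"
      proof (rule ccontr)
        assume "p \<noteq> q"
        then have "\<delta> \<le> dist (\<kappa> \<epsilon>) (\<nu> p) + dist (\<kappa> \<epsilon>) (\<nu> q)" using far p(1) q(1) by blast
        moreover have "dist (\<kappa> \<epsilon>) (\<nu> p) < \<delta>/3" using p(2) by simp
        ultimately show False using stay[OF elim(1)] \<delta> by linarith
      qed
      then show ?case using p by simp
    qed
  qed
  then show ?thesis using q by blast
qed

lemma cmod_diff_sgn: "cmod (c - (if c = 0 then 1 else sgn c)) = \<bar>cmod c - 1\<bar>"
proof (cases "c = 0")
  case False
  have "sgn c * complex_of_real (cmod c) = c"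
    using False by (simp add: sgn_div_norm scaleR_conv_of_real field_simps)
  then have "c - sgn c = sgn c * complex_of_real (cmod c - 1)" by (simp add: algebra_simps)
  then have "cmod (c - sgn c) = cmod (sgn c) * cmod (complex_of_real (cmod c - 1))"
    by (simp only: norm_mult)
  then show ?thesis using False by (simp only: norm_sgn norm_of_real) simp
qed simp

context
  fixes n :: nat and a :: "nat \<Rightarrow> nat \<Rightarrow> real" and \<nu> :: "nat \<Rightarrow> real" and r :: "nat \<Rightarrow> nat \<Rightarrow> real"
    and u :: "'b \<Rightarrow> nat \<Rightarrow> complex" and \<kappa> :: "'b \<Rightarrow> complex" and F :: "'b filter"
  assumes sys: "orthonormal_eigensystem n a \<nu> r"
    and sym: "\<And>i j. i < n \<Longrightarrow> j < n \<Longrightarrow> a i j = a j i"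
    and residual: "\<And>j. j < n \<Longrightarrow>
           ((\<lambda>\<epsilon>. (\<Sum>j'<n. complex_of_real (a j j') * u \<epsilon> j') - \<kappa> \<epsilon> * u \<epsilon> j) \<longlongrightarrow> 0) F"
begin

lemma residual_coefficients_tendsto_0:
  "((\<lambda>\<epsilon>. \<Sum>p<n. (cmod (complex_of_real (\<nu> p) - \<kappa> \<epsilon>))\<^sup>2 *
       (cmod (\<Sum>j<n. complex_of_real (r p j) * u \<epsilon> j))\<^sup>2) \<longlongrightarrow> 0) F"
proof -
  have "((\<lambda>\<epsilon>. \<Sum>j<n. (cmod ((\<Sum>j'<n. complex_of_real (a j j') * u \<epsilon> j') - \<kappa> \<epsilon> * u \<epsilon> j))\<^sup>2)
      \<longlongrightarrow> 0) F"
    by (rule tendsto_sum_power2_norm_zero) (simp add: residual)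
  then show ?thesis by (simp add: orthonormal_eigensystem_residual[OF sys sym])
qed

lemma approximate_eigenvalue_near_spectrum:
  assumes unit: "((\<lambda>\<epsilon>. \<Sum>j<n. (cmod (u \<epsilon> j))\<^sup>2) \<longlongrightarrow> 1) F" and \<eta>: "\<eta> > 0"
  shows "eventually (\<lambda>\<epsilon>. \<exists>p<n. dist (\<kappa> \<epsilon>) (complex_of_real (\<nu> p)) < \<eta>) F"
proof -
  define c where "c \<epsilon> p = (\<Sum>j<n. complex_of_real (r p j) * u \<epsilon> j)" for \<epsilon> p
  define A where "A \<epsilon> = (\<Sum>p<n. (cmod (complex_of_real (\<nu> p) - \<kappa> \<epsilon>))\<^sup>2 * (cmod (c \<epsilon> p))\<^sup>2)" for \<epsilon>
  have "(A \<longlongrightarrow> 0) F" unfolding A_def c_def by (rule residual_coefficients_tendsto_0)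
  from order_tendstoD(2)[OF this, of "\<eta>\<^sup>2 / 2"]
  have small: "eventually (\<lambda>\<epsilon>. A \<epsilon> < \<eta>\<^sup>2 / 2) F" using \<eta> by simp
  have "((\<lambda>\<epsilon>. \<Sum>p<n. (cmod (c \<epsilon> p))\<^sup>2) \<longlongrightarrow> 1) F"
    using unit parseval sys by (simp add: c_def orthonormal_eigensystem_def)
  from order_tendstoD(1)[OF this, of "1/2"]
  have big: "eventually (\<lambda>\<epsilon>. (\<Sum>p<n. (cmod (c \<epsilon> p))\<^sup>2) > 1/2) F" by simp
  show ?thesis using small big
  proof eventually_elim
    case (elim \<epsilon>)
    show ?case
    proof (rule ccontr)
      assume "\<not> ?case"
      then have "\<forall>p<n. \<eta> \<le> dist (\<kappa> \<epsilon>) (complex_of_real (\<nu> p))" using not_less by blast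
      then have "\<forall>p<n. \<eta> \<le> cmod (complex_of_real (\<nu> p) - \<kappa> \<epsilon>)"
        by (simp add: dist_norm norm_minus_commute)
      then have "\<eta>\<^sup>2 * (\<Sum>p<n. (cmod (c \<epsilon> p))\<^sup>2) \<le> A \<epsilon>"
        unfolding A_def sum_distrib_left using \<eta> by (intro sum_mono mult_right_mono power_mono) auto
      moreover have "\<eta>\<^sup>2 * (1/2) < \<eta>\<^sup>2 * (\<Sum>p<n. (cmod (c \<epsilon> p))\<^sup>2)"
        using elim \<eta> by (intro mult_strict_left_mono) auto
      ultimately show False using elim by simp
    qed
  qed
qed

lemma approximate_eigenvector_other_coefficients_tendsto_0:
  assumes lim: "(\<kappa> \<longlongrightarrow> complex_of_real (\<nu> q)) F" and q: "q < n"
  shows "((\<lambda>\<epsilon>. \<Sum>p\<in>{..<n} - {q}. (cmod (\<Sum>j<n. complex_of_real (r p j) * u \<epsilon> j))\<^sup>2) \<longlongrightarrow> 0) F"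
proof -
  define c where "c \<epsilon> p = (\<Sum>j<n. complex_of_real (r p j) * u \<epsilon> j)" for \<epsilon> p
  define A where "A \<epsilon> = (\<Sum>p<n. (cmod (complex_of_real (\<nu> p) - \<kappa> \<epsilon>))\<^sup>2 * (cmod (c \<epsilon> p))\<^sup>2)" for \<epsilon>
  have A: "(A \<longlongrightarrow> 0) F" unfolding A_def c_def by (rule residual_coefficients_tendsto_0)
  have "inj_on \<nu> {..<n}" using sys by (simp add: orthonormal_eigensystem_def)
  then obtain \<delta> where \<delta>: "\<delta> > 0" and sep: "\<And>p. p < n \<Longrightarrow> p \<noteq> q \<Longrightarrow> \<delta> \<le> dist (\<nu> p) (\<nu> q)"
    using ex_uniform_separation q by metis
  have "eventually (\<lambda>\<epsilon>. dist (\<kappa> \<epsilon>) (complex_of_real (\<nu> q)) < \<delta>/2) F"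
    using tendsto_iff[THEN iffD1, OF lim, rule_format, of "\<delta>/2"] \<delta> by simp
  then have "eventually (\<lambda>\<epsilon>. norm (\<Sum>p\<in>{..<n} - {q}. (cmod (c \<epsilon> p))\<^sup>2) \<le> norm (A \<epsilon>) * (4 / \<delta>\<^sup>2)) F"
  proof eventually_elim
    case (elim \<epsilon>)
    have "(cmod (c \<epsilon> p))\<^sup>2 \<le> (4 / \<delta>\<^sup>2) * ((cmod (complex_of_real (\<nu> p) - \<kappa> \<epsilon>))\<^sup>2 * (cmod (c \<epsilon> p))\<^sup>2)"
      if p: "p \<in> {..<n} - {q}" for p
    proof -
      have "\<delta> \<le> dist (\<kappa> \<epsilon>) (complex_of_real (\<nu> p)) + dist (\<kappa> \<epsilon>) (complex_of_real (\<nu> q))"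
        using sep[of p] p dist_triangle3[of "complex_of_real (\<nu> p)" "complex_of_real (\<nu> q)" "\<kappa> \<epsilon>"]
        by (simp add: dist_real_def dist_norm flip: of_real_diff)
      then have "\<delta>/2 \<le> cmod (complex_of_real (\<nu> p) - \<kappa> \<epsilon>)"
        using elim by (simp add: dist_norm norm_minus_commute)
      then have "(\<delta>/2)\<^sup>2 \<le> (cmod (complex_of_real (\<nu> p) - \<kappa> \<epsilon>))\<^sup>2"
        using \<delta> by (intro power_mono) auto
      then have "1 \<le> (4 / \<delta>\<^sup>2) * (cmod (complex_of_real (\<nu> p) - \<kappa> \<epsilon>))\<^sup>2"
        using \<delta> by (simp add: field_simps power2_eq_square)
      from mult_right_mono[OF this, of "(cmod (c \<epsilon> p))\<^sup>2"] show ?thesis by (simp add: mult.assoc)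
    qed
    then have "(\<Sum>p\<in>{..<n} - {q}. (cmod (c \<epsilon> p))\<^sup>2)
        \<le> (4 / \<delta>\<^sup>2) * (\<Sum>p\<in>{..<n} - {q}. (cmod (complex_of_real (\<nu> p) - \<kappa> \<epsilon>))\<^sup>2 * (cmod (c \<epsilon> p))\<^sup>2)"
      unfolding sum_distrib_left by (rule sum_mono)
    also have "\<dots> \<le> (4 / \<delta>\<^sup>2) * A \<epsilon>"
      unfolding A_def by (intro mult_left_mono sum_mono2) auto
    finally show ?case by (simp add: sum_nonneg A_def mult.commute)
  qed
  from tendsto_0_le[OF A this] show ?thesis by (simp add: c_def)
qed

lemma approximate_eigenvector_aligns:
  assumes unit: "((\<lambda>\<epsilon>. \<Sum>j<n. (cmod (u \<epsilon> j))\<^sup>2) \<longlongrightarrow> 1) F"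
    and lim: "(\<kappa> \<longlongrightarrow> complex_of_real (\<nu> q)) F" and q: "q < n"
  obtains z where "\<And>\<epsilon>. cmod (z \<epsilon>) = 1"
    and "((\<lambda>\<epsilon>. \<Sum>j<n. (cmod (u \<epsilon> j - z \<epsilon> * complex_of_real (r q j)))\<^sup>2) \<longlongrightarrow> 0) F"
proof -
  have on: "\<And>p. p < n \<Longrightarrow> (\<Sum>j<n. r p j * r q j) = (if p = q then 1 else 0)"
    and complete: "\<forall>i<n. \<forall>j<n. (\<Sum>p<n. r p i * r p j) = (if i = j then 1 else 0)"
    using sys q by (auto simp: orthonormal_eigensystem_def)
  define c where "c \<epsilon> p = (\<Sum>j<n. complex_of_real (r p j) * u \<epsilon> j)" for \<epsilon> p
  define R where "R \<epsilon> = (\<Sum>p\<in>{..<n} - {q}. (cmod (c \<epsilon> p))\<^sup>2)" for \<epsilon>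
  have R: "(R \<longlongrightarrow> 0) F"
    unfolding R_def c_def by (rule approximate_eigenvector_other_coefficients_tendsto_0[OF lim q])
  have split: "(\<Sum>p<n. (cmod (x p))\<^sup>2) = (cmod (x q))\<^sup>2 + (\<Sum>p\<in>{..<n} - {q}. (cmod (x p))\<^sup>2)" for x
    using q by (subst sum.remove[of _ q]) auto
  have "((\<lambda>\<epsilon>. (\<Sum>p<n. (cmod (c \<epsilon> p))\<^sup>2) - R \<epsilon>) \<longlongrightarrow> 1 - 0) F"
    using unit parseval[OF complete] by (intro tendsto_diff R) (simp add: c_def)
  then have "((\<lambda>\<epsilon>. (cmod (c \<epsilon> q))\<^sup>2) \<longlongrightarrow> 1) F" by (simp add: split R_def)
  from tendsto_real_sqrt[OF this] have cq: "((\<lambda>\<epsilon>. cmod (c \<epsilon> q)) \<longlongrightarrow> 1) F" by simp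
  define z where "z \<epsilon> = (if c \<epsilon> q = 0 then 1 else sgn (c \<epsilon> q))" for \<epsilon>
  have eq: "(\<Sum>j<n. (cmod (u \<epsilon> j - z \<epsilon> * complex_of_real (r q j)))\<^sup>2) = R \<epsilon> + (cmod (c \<epsilon> q) - 1)\<^sup>2"
    for \<epsilon>
  proof -
    have "(\<Sum>j<n. complex_of_real (r p j) * (u \<epsilon> j - z \<epsilon> * complex_of_real (r q j)))
       = c \<epsilon> p - (if p = q then z \<epsilon> else 0)" if "p < n" for p
    proof -
      have "(\<Sum>j<n. complex_of_real (r p j) * (u \<epsilon> j - z \<epsilon> * complex_of_real (r q j)))
         = c \<epsilon> p - z \<epsilon> * complex_of_real (\<Sum>j<n. r p j * r q j)"
        by (simp add: c_def algebra_simps sum_subtractf sum_distrib_left)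
      then show ?thesis using on[OF that] by simp
    qed
    then have "(\<Sum>j<n. (cmod (u \<epsilon> j - z \<epsilon> * complex_of_real (r q j)))\<^sup>2)
       = (\<Sum>p<n. (cmod (c \<epsilon> p - (if p = q then z \<epsilon> else 0)))\<^sup>2)"
      using parseval[OF complete, of "\<lambda>j. u \<epsilon> j - z \<epsilon> * complex_of_real (r q j)"] by simp
    also have "\<dots> = (cmod (c \<epsilon> q - z \<epsilon>))\<^sup>2 + R \<epsilon>"
      by (subst split) (simp add: R_def)
    finally show ?thesis using cmod_diff_sgn[of "c \<epsilon> q"] by (simp add: z_def)
  qed
  have "((\<lambda>\<epsilon>. R \<epsilon> + (cmod (c \<epsilon> q) - 1)\<^sup>2) \<longlongrightarrow> 0 + (1 - 1)\<^sup>2) F"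
    by (intro tendsto_intros R cq)
  then have "((\<lambda>\<epsilon>. \<Sum>j<n. (cmod (u \<epsilon> j - z \<epsilon> * complex_of_real (r q j)))\<^sup>2) \<longlongrightarrow> 0) F"
    by (simp add: eq)
  moreover have "cmod (z \<epsilon>) = 1" for \<epsilon> by (simp add: z_def norm_sgn)
  ultimately show ?thesis using that by blast
qed

end

lemma approximate_eigenvector_limit:
  fixes u :: "real \<Rightarrow> nat \<Rightarrow> complex" and \<kappa> :: "real \<Rightarrow> complex"
  assumes sys: "orthonormal_eigensystem n a \<nu> r"
    and sym: "\<And>i j. i < n \<Longrightarrow> j < n \<Longrightarrow> a i j = a j i"
    and \<gamma>: "\<gamma> > 0" and cont: "continuous_on {0<..<\<gamma>} \<kappa>"
    and residual: "\<And>j. j < n \<Longrightarrow>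
           ((\<lambda>\<epsilon>. (\<Sum>j'<n. complex_of_real (a j j') * u \<epsilon> j') - \<kappa> \<epsilon> * u \<epsilon> j) \<longlongrightarrow> 0) (at_right 0)"
    and unit: "((\<lambda>\<epsilon>. \<Sum>j<n. (cmod (u \<epsilon> j))\<^sup>2) \<longlongrightarrow> 1) (at_right 0)"
  obtains q z where "q < n" "(\<kappa> \<longlongrightarrow> complex_of_real (\<nu> q)) (at_right 0)" "\<And>\<epsilon>. cmod (z \<epsilon>) = 1"
    "((\<lambda>\<epsilon>. \<Sum>j<n. (cmod (u \<epsilon> j - z \<epsilon> * complex_of_real (r q j)))\<^sup>2) \<longlongrightarrow> 0) (at_right 0)"
proof -
  have "inj_on (\<lambda>p. complex_of_real (\<nu> p)) {..<n}"
    using sys by (auto simp: orthonormal_eigensystem_def inj_on_def)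
  then obtain q where "q < n" and lim: "(\<kappa> \<longlongrightarrow> complex_of_real (\<nu> q)) (at_right 0)"
    using continuous_tendsto_point_of_finite_set[OF _ \<gamma> cont]
      approximate_eigenvalue_near_spectrum[OF sys sym residual unit] by blast
  with approximate_eigenvector_aligns[OF sys sym residual unit lim] that show ?thesis by blast
qed

section \<open>Eigenvectors of perturbed diagonal matrices\<close>

lemma spanning_columns_invertible:
  fixes f :: "nat \<Rightarrow> 'a::field vec"
  assumes span: "\<And>v. v \<in> carrier_vec n \<Longrightarrow> \<exists>c. v = vec n (\<lambda>i. \<Sum>l<n. c l * f l $ i)"
  shows "\<exists>G \<in> carrier_mat n n. mat n n (\<lambda>(i,l). f l $ i) * G = 1\<^sub>m n \<and> G * mat n n (\<lambda>(i,l). f l $ i) = 1\<^sub>m n"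
proof -
  define F where "F = mat n n (\<lambda>(i,l). f l $ i)"
  have F: "F \<in> carrier_mat n n" by (simp add: F_def)
  have "\<forall>i. \<exists>c. i < n \<longrightarrow> unit_vec n i = vec n (\<lambda>i'. \<Sum>l<n. c l * f l $ i')"
    using span unit_vec_carrier by blast
  from choice[OF this] obtain C
    where C: "\<And>i. i < n \<Longrightarrow> unit_vec n i = vec n (\<lambda>i'. \<Sum>l<n. C i l * f l $ i')"
    by blast
  define G where "G = mat n n (\<lambda>(l,i). C i l)"
  have G: "G \<in> carrier_mat n n" by (simp add: G_def)
  have FG: "F * G = 1\<^sub>m n"
  proof (rule eq_matI)
    fix i i' assume "i < dim_row (1\<^sub>m n)" "i' < dim_col (1\<^sub>m n)"
    then have ii': "i < n" "i' < n" by auto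
    have "(F * G) $$ (i,i') = (\<Sum>l<n. C i' l * f l $ i)"
      using ii' by (simp add: F_def G_def scalar_prod_def lessThan_atLeast0 mult.commute)
    also have "\<dots> = unit_vec n i' $ i" using C[OF ii'(2)] ii'(1) by simp
    finally show "(F * G) $$ (i,i') = 1\<^sub>m n $$ (i,i')" using ii' by simp
  qed (simp_all add: F_def G_def)
  moreover have "G * F = 1\<^sub>m n" using mat_mult_left_right_inverse[OF F G] FG by blast
  ultimately show ?thesis using G unfolding F_def by blast
qed

lemma eigenvalue_mem_eigenbasis_values:
  fixes A :: "'a::field mat"
  assumes A: "A \<in> carrier_mat n n"
    and eig: "\<And>l. l < n \<Longrightarrow> f l \<in> carrier_vec n \<and> A *\<^sub>v f l = lam l \<cdot>\<^sub>v f l"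
    and span: "\<And>v. v \<in> carrier_vec n \<Longrightarrow> \<exists>c. v = vec n (\<lambda>i. \<Sum>l<n. c l * f l $ i)"
    and \<mu>: "eigenvalue A \<mu>"
  shows "\<mu> \<in> lam ` {..<n}"
proof -
  define F where "F = mat n n (\<lambda>(i,l). f l $ i)"
  define \<Lambda> where "\<Lambda> = mat n n (\<lambda>(l,m). if l = m then lam l else 0)"
  have F: "F \<in> carrier_mat n n" and \<Lambda>: "\<Lambda> \<in> carrier_mat n n" by (simp_all add: F_def \<Lambda>_def)
  obtain G where G: "G \<in> carrier_mat n n" and FG: "F * G = 1\<^sub>m n" and GF: "G * F = 1\<^sub>m n"
    using spanning_columns_invertible[OF span] unfolding F_def by blast
  have AF: "A * F = F * \<Lambda>"
  proof (rule eq_matI)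
    fix i l assume "i < dim_row (F * \<Lambda>)" "l < dim_col (F * \<Lambda>)"
    then have il: "i < n" "l < n" using F \<Lambda> by auto
    have "col F l = f l" using il eig[OF il(2)] by (auto simp: F_def)
    then have "(A * F) $$ (i,l) = (A *\<^sub>v f l) $ i" using A F il by simp
    also have "\<dots> = f l $ i * lam l" using eig[OF il(2)] il by (auto simp: mult.commute)
    also have "\<dots> = (\<Sum>m<n. if m = l then f m $ i * lam m else 0)" using il by simp
    also have "\<dots> = (\<Sum>m<n. f m $ i * (if m = l then lam m else 0))" by (intro sum.cong) auto
    also have "\<dots> = (F * \<Lambda>) $$ (i,l)"
      using il by (simp add: F_def \<Lambda>_def scalar_prod_def lessThan_atLeast0)
    finally show "(A * F) $$ (i,l) = (F * \<Lambda>) $$ (i,l)" .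
  qed (use A F \<Lambda> in auto)
  obtain v where v: "v \<in> carrier_vec n" "v \<noteq> 0\<^sub>v n" "A *\<^sub>v v = \<mu> \<cdot>\<^sub>v v"
    using \<mu> A unfolding eigenvalue_def eigenvector_def by auto
  define c where "c = G *\<^sub>v v"
  have c: "c \<in> carrier_vec n" using G by (simp add: c_def carrier_vecI)
  have vc: "v = F *\<^sub>v c"
    using assoc_mult_mat_vec[OF F G v(1)] FG v(1) by (simp add: c_def)
  have left_inverse: "G *\<^sub>v (F *\<^sub>v w) = w" if "w \<in> carrier_vec n" for w
    using assoc_mult_mat_vec[OF G F that] GF that by simp
  have "F *\<^sub>v (\<Lambda> *\<^sub>v c) = A *\<^sub>v (F *\<^sub>v c)"
    using AF assoc_mult_mat_vec[OF F \<Lambda> c] assoc_mult_mat_vec[OF A F c] by simp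
  also have "\<dots> = F *\<^sub>v (\<mu> \<cdot>\<^sub>v c)" using v(3) mult_mat_vec[OF F c] by (simp add: vc)
  finally have "G *\<^sub>v (F *\<^sub>v (\<Lambda> *\<^sub>v c)) = G *\<^sub>v (F *\<^sub>v (\<mu> \<cdot>\<^sub>v c))" by simp
  then have \<Lambda>c: "\<Lambda> *\<^sub>v c = \<mu> \<cdot>\<^sub>v c" using \<Lambda> c by (simp add: left_inverse)
  obtain l where l: "l < n" "c $ l \<noteq> 0"
  proof (rule ccontr)
    assume "\<not> thesis"
    then have "c = 0\<^sub>v n" using that c by (intro eq_vecI) auto
    then have "v = 0\<^sub>v n" using vc F by (intro eq_vecI) (auto simp: scalar_prod_def)
    then show False using v(2) by simp
  qed
  have "(\<Lambda> *\<^sub>v c) $ l = (\<Sum>m<n. (if l = m then lam l else 0) * c $ m)"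
    using l c by (simp add: \<Lambda>_def scalar_prod_def lessThan_atLeast0)
  also have "\<dots> = (\<Sum>m<n. if l = m then lam l * c $ m else 0)" by (intro sum.cong) auto
  also have "\<dots> = lam l * c $ l" using l by simp
  finally have "lam l * c $ l = \<mu> * c $ l" using \<Lambda>c l c by simp
  then have "lam l = \<mu>" using l by simp
  then show ?thesis using l by auto
qed

lemma eigenbasis_eigenvalues_inj:
  fixes A :: "'a::field mat"
  assumes A: "A \<in> carrier_mat n n"
    and eig: "\<And>l. l < n \<Longrightarrow> f l \<in> carrier_vec n \<and> A *\<^sub>v f l = lam l \<cdot>\<^sub>v f l"
    and span: "\<And>v. v \<in> carrier_vec n \<Longrightarrow> \<exists>c. v = vec n (\<lambda>i. \<Sum>l<n. c l * f l $ i)"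
    and card: "card {\<mu>. eigenvalue A \<mu>} = n"
  shows "inj_on lam {..<n}"
proof -
  have "{\<mu>. eigenvalue A \<mu>} \<subseteq> lam ` {..<n}"
    using eigenvalue_mem_eigenbasis_values[OF A eig span] by blast
  from card_mono[OF _ this] have "n \<le> card (lam ` {..<n})" using card by simp
  then show ?thesis using card_image_le[of "{..<n}" lam] by (intro eq_card_imp_inj_on) auto
qed

lemma perturbed_diagonal_eigenvectors_orthogonal:
  fixes S :: "nat \<Rightarrow> nat \<Rightarrow> 'a::field"
  assumes sym: "\<And>i j. i < n \<Longrightarrow> j < n \<Longrightarrow> S i j = S j i"
    and d: "\<And>i. i < n \<Longrightarrow> d i \<noteq> 0"
    and x: "\<And>i. i < n \<Longrightarrow> d i * (x i + c * (\<Sum>j<n. S i j * x j)) = a * x i"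
    and y: "\<And>i. i < n \<Longrightarrow> d i * (y i + c * (\<Sum>j<n. S i j * y j)) = b * y i"
    and "a \<noteq> b"
  shows "(\<Sum>i<n. x i * y i / d i) = 0"
proof -
  have pair: "(\<Sum>i<n. u i * v i) + c * (\<Sum>i<n. v i * (\<Sum>j<n. S i j * u j))
      = e * (\<Sum>i<n. u i * v i / d i)"
    if u: "\<And>i. i < n \<Longrightarrow> d i * (u i + c * (\<Sum>j<n. S i j * u j)) = e * u i" for u v e
  proof -
    have "u i * v i + c * (v i * (\<Sum>j<n. S i j * u j)) = e * (u i * v i / d i)" if "i < n" for i
    proof -
      have "u i + c * (\<Sum>j<n. S i j * u j) = e * u i / d i"
        using u[OF that] d[OF that] by (simp add: field_simps)
      then have "v i * (u i + c * (\<Sum>j<n. S i j * u j)) = v i * (e * u i / d i)" by simp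
      then show ?thesis by (simp add: algebra_simps)
    qed
    then have "(\<Sum>i<n. u i * v i + c * (v i * (\<Sum>j<n. S i j * u j))) = (\<Sum>i<n. e * (u i * v i / d i))"
      by (intro sum.cong) auto
    then show ?thesis by (simp add: sum.distrib sum_distrib_left)
  qed
  have swap: "(\<Sum>i<n. y i * (\<Sum>j<n. S i j * x j)) = (\<Sum>i<n. x i * (\<Sum>j<n. S i j * y j))"
  proof -
    have "(\<Sum>i<n. y i * (\<Sum>j<n. S i j * x j)) = (\<Sum>j<n. \<Sum>i<n. y i * S i j * x j)"
      by (simp add: sum_distrib_left mult.assoc) (rule sum.swap)
    also have "\<dots> = (\<Sum>j<n. x j * (\<Sum>i<n. S j i * y i))"
      using sym by (auto simp: sum_distrib_left mult_ac intro!: sum.cong)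
    finally show ?thesis .
  qed
  define B where "B = (\<Sum>i<n. x i * y i / d i)"
  have xy: "(\<Sum>i<n. x i * y i) = (\<Sum>i<n. y i * x i)" and yx: "(\<Sum>i<n. y i * x i / d i) = B"
    by (simp_all add: B_def mult.commute)
  have "a * B = (\<Sum>i<n. x i * y i) + c * (\<Sum>i<n. y i * (\<Sum>j<n. S i j * x j))"
    using pair[OF x, of y] by (simp add: B_def)
  also have "\<dots> = (\<Sum>i<n. y i * x i) + c * (\<Sum>i<n. x i * (\<Sum>j<n. S i j * y j))"
    by (simp only: xy swap)
  also have "\<dots> = b * B" using pair[OF y, of x] yx by simp
  finally have "(a - b) * B = 0" by (simp add: algebra_simps)
  then show ?thesis using \<open>a \<noteq> b\<close> by (simp add: B_def)
qed


lemma Arg_mult_negative: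
  assumes p: "p \<noteq> 0" and v: "v < 0"
  shows "\<exists>m::int. Arg (p * complex_of_real v) = Arg p + pi + 2 * pi * of_int m"
proof -
  have sgn: "sgn (p * complex_of_real v) = cis (Arg p + pi)"
  proof -
    have "sgn (p * complex_of_real v) = - sgn p" using v by (simp add: sgn_mult sgn_of_real)
    also have "sgn p = cis (Arg p)" using cis_Arg[OF p] by simp
    finally show ?thesis by (simp flip: cis_mult)
  qed
  have b: "- pi < Arg p" "Arg p \<le> pi" using Arg_bounded by auto
  show ?thesis
  proof (cases "Arg p \<le> 0")
    case True
    have "Arg (p * complex_of_real v) = Arg p + pi"
      by (rule cis_Arg_unique) (use sgn b True in auto)
    then show ?thesis by (intro exI[of _ 0]) simp
  next
    case False
    have "cis (Arg p - pi) = cis (Arg p + pi)"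
      using cis_divide[of "Arg p + pi" "2 * pi"] by simp
    then have "Arg (p * complex_of_real v) = Arg p - pi"
      by (intro cis_Arg_unique) (use sgn b False in auto)
    then show ?thesis by (intro exI[of _ "-1"]) simp
  qed
qed

lemma unit_complex_eq_exp:
  assumes "cmod z = 1"
  shows "\<exists>\<theta>\<in>{0..<2*pi}. exp (\<i> * complex_of_real \<theta>) = z"
proof -
  have "z \<noteq> 0" using assms by auto
  then have c: "cis (Arg z) = z" using cis_Arg[of z] assms by (simp add: sgn_div_norm)
  have b: "- pi < Arg z" "Arg z \<le> pi" using Arg_bounded by auto
  show ?thesis
  proof (cases "Arg z \<ge> 0")
    case True
    then show ?thesis using b c by (intro bexI[of _ "Arg z"]) (auto simp: cis_conv_exp mult.commute)
  next
    case False
    have "cis (Arg z + 2 * pi) = cis (Arg z)" by (simp flip: cis_mult)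
    then show ?thesis using b c False
      by (intro bexI[of _ "Arg z + 2 * pi"]) (auto simp: cis_conv_exp mult.commute)
  qed
qed

lemma smallo_of_difference_quotient_tendsto:
  fixes h :: "real \<Rightarrow> complex"
  assumes lim: "((\<lambda>\<epsilon>. (h \<epsilon> - c) / (complex_of_real \<epsilon> * c)) \<longlongrightarrow> \<nu>) (at_right 0)" and c: "c \<noteq> 0"
  shows "(\<lambda>\<epsilon>. h \<epsilon> - c - complex_of_real \<epsilon> * (c * \<nu>)) \<in> o[at_right 0](\<lambda>\<epsilon>. complex_of_real \<epsilon>)"
proof (rule landau_o.smallI)
  fix e :: real assume e: "e > 0"
  have "eventually (\<lambda>\<epsilon>. dist ((h \<epsilon> - c) / (complex_of_real \<epsilon> * c)) \<nu> < e / cmod c) (at_right 0)"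
    using lim e c unfolding tendsto_iff by simp
  moreover have "eventually (\<lambda>\<epsilon>. \<epsilon> > 0) (at_right (0::real))" by (rule eventually_at_right_less)
  ultimately show "eventually (\<lambda>\<epsilon>. cmod (h \<epsilon> - c - complex_of_real \<epsilon> * (c * \<nu>))
      \<le> e * cmod (complex_of_real \<epsilon>)) (at_right 0)"
  proof eventually_elim
    case (elim \<epsilon>)
    have "h \<epsilon> - c - complex_of_real \<epsilon> * (c * \<nu>)
        = (complex_of_real \<epsilon> * c) * ((h \<epsilon> - c) / (complex_of_real \<epsilon> * c) - \<nu>)"
      using elim c by (simp add: field_simps)
    then have "cmod (h \<epsilon> - c - complex_of_real \<epsilon> * (c * \<nu>))
        = \<epsilon> * cmod c * cmod ((h \<epsilon> - c) / (complex_of_real \<epsilon> * c) - \<nu>)"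
      using elim by (simp add: norm_mult)
    also have "\<dots> \<le> \<epsilon> * cmod c * (e / cmod c)"
      using elim by (intro mult_left_mono) (auto simp: dist_norm)
    finally show ?case using elim c by (simp add: mult.commute)
  qed
qed

lemma first_order_expansion:
  fixes h :: "real \<Rightarrow> complex"
  assumes lim: "((\<lambda>\<epsilon>. (h \<epsilon> - c) / (complex_of_real \<epsilon> * c)) \<longlongrightarrow> complex_of_real \<nu>) (at_right 0)"
    and c: "c \<noteq> 0" and \<nu>: "\<nu> \<le> 0"
  shows "(\<lambda>\<epsilon>. h \<epsilon> - c - complex_of_real \<epsilon> * (c * complex_of_real \<nu>)) \<in> o[at_right 0](\<lambda>\<epsilon>. complex_of_real \<epsilon>)
    \<and> (c * complex_of_real \<nu> \<noteq> 0 \<longrightarrow> (\<exists>m::int. Arg (c * complex_of_real \<nu>) = Arg c + pi + 2 * pi * of_int m))"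
proof (intro conjI impI)
  show "(\<lambda>\<epsilon>. h \<epsilon> - c - complex_of_real \<epsilon> * (c * complex_of_real \<nu>)) \<in> o[at_right 0](\<lambda>\<epsilon>. complex_of_real \<epsilon>)"
    by (rule smallo_of_difference_quotient_tendsto[OF lim c])
  assume "c * complex_of_real \<nu> \<noteq> 0"
  with \<nu> have "\<nu> < 0" by force
  then show "\<exists>m::int. Arg (c * complex_of_real \<nu>) = Arg c + pi + 2 * pi * of_int m"
    by (rule Arg_mult_negative[OF c])
qed

lemma tendsto_sum_products_of_aligned:
  fixes a b :: "'f \<Rightarrow> nat \<Rightarrow> complex" and r :: "nat \<Rightarrow> real"
  assumes a: "\<And>j. j < n \<Longrightarrow> ((\<lambda>\<epsilon>. a \<epsilon> j - y \<epsilon> * complex_of_real (r j)) \<longlongrightarrow> 0) F"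
    and b: "\<And>j. j < n \<Longrightarrow> ((\<lambda>\<epsilon>. b \<epsilon> j - z \<epsilon> * complex_of_real (r j)) \<longlongrightarrow> 0) F"
    and y: "\<And>\<epsilon>. cmod (y \<epsilon>) = 1"
    and bounded: "eventually (\<lambda>\<epsilon>. \<forall>j<n. cmod (b \<epsilon> j) \<le> 1) F"
    and r: "(\<Sum>j<n. r j * r j) = 1"
  shows "((\<lambda>\<epsilon>. (\<Sum>j<n. a \<epsilon> j * b \<epsilon> j) - y \<epsilon> * z \<epsilon>) \<longlongrightarrow> 0) F"
proof -
  have eq: "(\<Sum>j<n. a \<epsilon> j * b \<epsilon> j) - y \<epsilon> * z \<epsilon>
      = (\<Sum>j<n. (a \<epsilon> j - y \<epsilon> * r j) * b \<epsilon> j + y \<epsilon> * r j * (b \<epsilon> j - z \<epsilon> * r j))" for \<epsilon>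
  proof -
    have "(\<Sum>j<n. complex_of_real (r j) * complex_of_real (r j)) = 1"
    proof -
      have "complex_of_real (\<Sum>j<n. r j * r j) = 1" by (simp only: r of_real_1)
      then show ?thesis by simp
    qed
    then have "y \<epsilon> * z \<epsilon> = y \<epsilon> * z \<epsilon> * (\<Sum>j<n. complex_of_real (r j) * complex_of_real (r j))"
      by simp
    also have "\<dots> = (\<Sum>j<n. y \<epsilon> * r j * (z \<epsilon> * r j))" by (simp add: sum_distrib_left mult_ac)
    finally have "y \<epsilon> * z \<epsilon> = (\<Sum>j<n. y \<epsilon> * r j * (z \<epsilon> * r j))" .
    then show ?thesis by (simp add: algebra_simps sum_subtractf sum.distrib)
  qed
  have "((\<lambda>\<epsilon>. \<Sum>j<n. (a \<epsilon> j - y \<epsilon> * r j) * b \<epsilon> j + y \<epsilon> * r j * (b \<epsilon> j - z \<epsilon> * r j)) \<longlongrightarrow> 0) F"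
  proof (rule tendsto_null_sum, rule tendsto_add_zero)
    fix j assume "j \<in> {..<n}"
    then have j: "j < n" by simp
    have "eventually (\<lambda>\<epsilon>. cmod ((a \<epsilon> j - y \<epsilon> * r j) * b \<epsilon> j) \<le> cmod (a \<epsilon> j - y \<epsilon> * r j) * 1) F"
      using bounded by eventually_elim (use j in \<open>auto simp: norm_mult intro: mult_left_le\<close>)
    from tendsto_0_le[OF a[OF j] this]
    show "((\<lambda>\<epsilon>. (a \<epsilon> j - y \<epsilon> * r j) * b \<epsilon> j) \<longlongrightarrow> 0) F" .
    have "eventually (\<lambda>\<epsilon>. cmod (y \<epsilon> * r j * (b \<epsilon> j - z \<epsilon> * r j))
        \<le> cmod (b \<epsilon> j - z \<epsilon> * r j) * \<bar>r j\<bar>) F"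
      using y by (simp add: norm_mult)
    from tendsto_0_le[OF b[OF j] this]
    show "((\<lambda>\<epsilon>. y \<epsilon> * r j * (b \<epsilon> j - z \<epsilon> * r j)) \<longlongrightarrow> 0) F" .
  qed
  then show ?thesis by (simp add: eq)
qed


definition block_embed :: "nat list \<Rightarrow> nat \<Rightarrow> (nat \<Rightarrow> real) \<Rightarrow> complex vec" where
  "block_embed L s x = vec (sum_list L) (\<lambda>i. if i \<in> block L s then complex_of_real (x (i - Npre L s)) else 0)"

lemma block_embed_carrier [simp]: "block_embed L s x \<in> carrier_vec (sum_list L)"
  by (simp add: block_embed_def)

lemma block_embed_index_in:
  "s < length L \<Longrightarrow> j < L ! s \<Longrightarrow> block_embed L s x $ (Npre L s + j) = complex_of_real (x j)"
  using Npre_add_in_block Npre_add_less by (simp add: block_embed_def)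

lemma block_embed_index_out: "i < sum_list L \<Longrightarrow> i \<notin> block L s \<Longrightarrow> block_embed L s x $ i = 0"
  by (simp add: block_embed_def)

lemma sum_block_embed:
  assumes s: "s < length L" and "\<And>i. h i 0 = 0"
  shows "(\<Sum>i<sum_list L. h i (block_embed L s x $ i))
       = (\<Sum>j<L ! s. h (Npre L s + j) (complex_of_real (x j)))"
  using assms by (simp add: sum_lessThan_split_block[OF s] block_embed_index_in block_embed_index_out)

lemma block_embed_inner:
  assumes s: "s < length L" and t: "t < length L"
  shows "block_embed L s x \<bullet>c block_embed L t y
       = (if s = t then complex_of_real (\<Sum>j<L ! s. x j * y j) else 0)"
proof -
  have "block_embed L s x \<bullet>c block_embed L t y
      = (\<Sum>i<sum_list L. block_embed L s x $ i * cnj (block_embed L t y $ i))"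
    by (simp add: scalar_prod_def block_embed_def atLeast0LessThan)
  also have "\<dots> = (\<Sum>j<L ! s. complex_of_real (x j) * cnj (block_embed L t y $ (Npre L s + j)))"
    by (subst sum_block_embed[OF s, where h = "\<lambda>i z. z * cnj (block_embed L t y $ i)"]) simp_all
  also have "\<dots> = (if s = t then complex_of_real (\<Sum>j<L ! s. x j * y j) else 0)"
  proof (cases "s = t")
    case False
    then have "Npre L s + j \<notin> block L t" if "j < L ! s" for j
      using Npre_add_in_block[OF s that] block_unique by blast
    then show ?thesis using False Npre_add_less[OF s] by (simp add: block_embed_index_out)
  qed (use t in \<open>auto intro!: sum.cong simp: block_embed_index_in\<close>)
  finally show ?thesis .
qed

lemma vnorm_block_embed:
  assumes s: "s < length L" and unit: "(\<Sum>j<L ! s. x j * x j) = 1"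
  shows "vnorm (block_embed L s x) = 1"
proof -
  have "(\<Sum>i<sum_list L. (cmod (block_embed L s x $ i))\<^sup>2) = (\<Sum>j<L ! s. x j * x j)"
    by (subst sum_block_embed[OF s, where h = "\<lambda>i z. (cmod z)\<^sup>2"]) (simp_all add: power2_eq_square)
  then show ?thesis using unit by (simp add: vnorm_def block_embed_def)
qed

lemma Dmat_WhatL_mult_block_embed:
  assumes s: "s < length L"
    and eig: "\<And>i. i < L ! s \<Longrightarrow> (\<Sum>j<L ! s. W $$ (Npre L s + i, Npre L s + j) * x j) = \<nu> * x i"
  shows "(Dmat k \<beta> L * map_mat complex_of_real (WhatL L W)) *\<^sub>v block_embed L s x
       = (phase k \<beta> s * complex_of_real \<nu>) \<cdot>\<^sub>v block_embed L s x"
proof (rule eq_vecI)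
  let ?g = "block_embed L s x" and ?M = "map_mat complex_of_real (WhatL L W)"
  show "dim_vec ((Dmat k \<beta> L * ?M) *\<^sub>v ?g) = dim_vec ((phase k \<beta> s * complex_of_real \<nu>) \<cdot>\<^sub>v ?g)"
    by (simp add: Dmat_def block_embed_def)
  fix i assume "i < dim_vec ((phase k \<beta> s * complex_of_real \<nu>) \<cdot>\<^sub>v ?g)"
  then have i: "i < sum_list L" by (simp add: block_embed_def)
  have M: "?M $$ (i, Npre L s + j) = (if i \<in> block L s then complex_of_real (W $$ (i, Npre L s + j)) else 0)"
    if "j < L ! s" for j
  proof -
    have "(\<exists>t<length L. i \<in> block L t \<and> Npre L s + j \<in> block L t) \<longleftrightarrow> i \<in> block L s"
      using Npre_add_in_block[OF s that] s block_unique by blast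
    then show ?thesis using i Npre_add_less[OF s that] by (simp add: WhatL_def)
  qed
  have "((Dmat k \<beta> L * ?M) *\<^sub>v ?g) $ i = phase k \<beta> (block_of L i) * (\<Sum>j<sum_list L. ?M $$ (i,j) * ?g $ j)"
    by (rule Dmat_mult_mat_vec_index) (simp_all add: WhatL_def i)
  also have "(\<Sum>j<sum_list L. ?M $$ (i,j) * ?g $ j) = (\<Sum>j<L ! s. ?M $$ (i, Npre L s + j) * complex_of_real (x j))"
    by (subst sum_block_embed[OF s, where h = "\<lambda>j z. ?M $$ (i,j) * z"]) simp_all
  also have "\<dots> = (\<Sum>j<L ! s. (if i \<in> block L s then complex_of_real (W $$ (i, Npre L s + j)) else 0)
      * complex_of_real (x j))"
    by (intro sum.cong) (simp_all add: M)
  finally have lhs: "((Dmat k \<beta> L * ?M) *\<^sub>v ?g) $ i = phase k \<beta> (block_of L i) *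
      (\<Sum>j<L ! s. (if i \<in> block L s then complex_of_real (W $$ (i, Npre L s + j)) else 0) * complex_of_real (x j))" .
  show "((Dmat k \<beta> L * ?M) *\<^sub>v ?g) $ i = ((phase k \<beta> s * complex_of_real \<nu>) \<cdot>\<^sub>v ?g) $ i"
  proof (cases "i \<in> block L s")
    case True
    define i' where "i' = i - Npre L s"
    have i': "i' < L ! s" "i = Npre L s + i'" using True s by (auto simp: block_eq_atLeastLessThan i'_def)
    have "(\<Sum>j<L ! s. complex_of_real (W $$ (i, Npre L s + j)) * complex_of_real (x j)) = complex_of_real (\<nu> * x i')"
      using eig[OF i'(1)] i'(2) by (simp flip: of_real_sum of_real_mult)
    then show ?thesis using lhs True i block_of_eq[OF True s] block_embed_index_in[OF s i'(1)] i'(2)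
      by (simp add: block_embed_def)
  next
    case False
    then show ?thesis using lhs i by (simp add: block_embed_def)
  qed
qed

lemma block_embed_orthonormal_eigenbasis:
  fixes W :: "real mat"
  assumes sys: "\<And>s. s < length L \<Longrightarrow>
      orthonormal_eigensystem (L ! s) (\<lambda>i j. W $$ (Npre L s + i, Npre L s + j)) (\<nu> s) (r s)"
    and q: "\<And>l. l < sum_list L \<Longrightarrow> q l < L ! block_of L l"
    and q_inj: "\<And>l m. l < sum_list L \<Longrightarrow> m < sum_list L \<Longrightarrow> block_of L l = block_of L m \<Longrightarrow> l \<noteq> m
      \<Longrightarrow> q l \<noteq> q m"
  defines "g \<equiv> \<lambda>l. block_embed L (block_of L l) (r (block_of L l) (q l))"
  shows "\<forall>l < sum_list L. g l \<in> carrier_vec (sum_list L) \<and>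
      (Dmat k \<beta> L * map_mat complex_of_real (WhatL L W)) *\<^sub>v g l
        = (phase k \<beta> (block_of L l) * complex_of_real (\<nu> (block_of L l) (q l))) \<cdot>\<^sub>v g l"
    and "\<forall>l < sum_list L. \<forall>m < sum_list L. g l \<bullet>c g m = (if l = m then 1 else 0)"
proof -
  let ?b = "block_of L"
  have b: "?b l < length L" if "l < sum_list L" for l using block_of that by auto
  show "\<forall>l < sum_list L. g l \<in> carrier_vec (sum_list L) \<and>
      (Dmat k \<beta> L * map_mat complex_of_real (WhatL L W)) *\<^sub>v g l
        = (phase k \<beta> (?b l) * complex_of_real (\<nu> (?b l) (q l))) \<cdot>\<^sub>v g l"
  proof (intro allI impI conjI)
    fix l assume l: "l < sum_list L"
    show "g l \<in> carrier_vec (sum_list L)" by (simp add: g_def)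
    show "(Dmat k \<beta> L * map_mat complex_of_real (WhatL L W)) *\<^sub>v g l
        = (phase k \<beta> (?b l) * complex_of_real (\<nu> (?b l) (q l))) \<cdot>\<^sub>v g l"
      unfolding g_def using sys[OF b[OF l]] q[OF l]
      by (intro Dmat_WhatL_mult_block_embed b[OF l]) (simp add: orthonormal_eigensystem_def)
  qed
  show "\<forall>l < sum_list L. \<forall>m < sum_list L. g l \<bullet>c g m = (if l = m then 1 else 0)"
  proof (intro allI impI)
    fix l m assume l: "l < sum_list L" and m: "m < sum_list L"
    show "g l \<bullet>c g m = (if l = m then 1 else 0)"
    proof (cases "?b l = ?b m")
      case True
      then have "g l \<bullet>c g m = complex_of_real (\<Sum>j<L ! ?b l. r (?b l) (q l) j * r (?b l) (q m) j)"
        using block_embed_inner[OF b[OF l] b[OF m]] by (simp add: g_def)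
      also have "\<dots> = (if l = m then 1 else 0)"
        using sys[OF b[OF l]] q[OF l] q[OF m] True q_inj[OF l m True]
        by (auto simp: orthonormal_eigensystem_def)
      finally show ?thesis .
    next
      case False
      then show ?thesis using block_embed_inner[OF b[OF l] b[OF m]] by (auto simp: g_def)
    qed
  qed
qed

lemma vnorm_nonneg: "0 \<le> vnorm v"
  by (simp add: vnorm_def sum_nonneg)

lemma cp_dist_nonneg: "0 \<le> cp_dist v w"
  unfolding cp_dist_def by (rule cInf_greatest) (use vnorm_nonneg pi_gt_zero in auto)

lemma cp_dist_le_unit_multiple:
  assumes v: "vnorm v = 1" and w: "vnorm w = 1" and z: "cmod z = 1"
  shows "cp_dist v w \<le> vnorm (v - z \<cdot>\<^sub>v w)"
proof -
  obtain \<theta> where \<theta>: "\<theta> \<in> {0..<2*pi}" "exp (\<i> * complex_of_real \<theta>) = z"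
    using unit_complex_eq_exp[OF z] by blast
  have "cp_dist v w \<le> vnorm (complex_of_real (1 / vnorm v) \<cdot>\<^sub>v v
                      - (exp (\<i> * of_real \<theta>) * complex_of_real (1 / vnorm w)) \<cdot>\<^sub>v w)"
    unfolding cp_dist_def
    by (rule cInf_lower) (use \<theta>(1) vnorm_nonneg in \<open>auto intro!: bdd_belowI[of _ 0]\<close>)
  then show ?thesis using v w \<theta>(2) by simp
qed

section \<open>The perturbed eigenbasis\<close>

locale block_perturbation =
  fixes L :: "nat list" and W :: "real mat" and k :: int and \<beta> :: "nat \<Rightarrow> real" and \<gamma> :: real
    and f :: "real \<Rightarrow> nat \<Rightarrow> complex vec" and lam :: "real \<Rightarrow> nat \<Rightarrow> complex"
  assumes admissible: "admissible L W"
    and phase_distinct: "\<And>s t. s < length L \<Longrightarrow> t < length L \<Longrightarrow> s \<noteq> t \<Longrightarrow> phase k \<beta> s \<noteq> phase k \<beta> t"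
    and \<gamma>: "\<gamma> > 0"
    and distinct_ev: "\<forall>\<epsilon> \<in> {0<..<\<gamma>}. card {\<mu>. eigenvalue (Dmat k \<beta> L *
           (1\<^sub>m (sum_list L) + complex_of_real \<epsilon> \<cdot>\<^sub>m map_mat complex_of_real W)) \<mu>} = sum_list L"
    and eigvec: "\<forall>\<epsilon> \<in> {0<..<\<gamma>}. \<forall>l < sum_list L. f \<epsilon> l \<in> carrier_vec (sum_list L) \<and> vnorm (f \<epsilon> l) = 1
           \<and> (Dmat k \<beta> L * (1\<^sub>m (sum_list L) + complex_of_real \<epsilon> \<cdot>\<^sub>m map_mat complex_of_real W)) *\<^sub>v f \<epsilon> l
             = lam \<epsilon> l \<cdot>\<^sub>v f \<epsilon> l"
    and basis: "\<forall>\<epsilon> \<in> {0<..<\<gamma>}. \<forall>v \<in> carrier_vec (sum_list L). \<exists>c :: nat \<Rightarrow> complex.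
           v = vec (sum_list L) (\<lambda>i. \<Sum>l < sum_list L. c l * (f \<epsilon> l $ i))"
    and cont: "\<forall>l < sum_list L. continuous_on {0<..<\<gamma>} (\<lambda>\<epsilon>. lam \<epsilon> l)"
    and lim: "\<forall>s < length L. \<forall>l \<in> block L s. ((\<lambda>\<epsilon>. lam \<epsilon> l) \<longlongrightarrow> phase k \<beta> s) (at_right 0)"
begin

abbreviation N :: nat where "N \<equiv> sum_list L"
abbreviation ph :: "nat \<Rightarrow> complex" where "ph \<equiv> phase k \<beta>"
abbreviation P :: "real \<Rightarrow> complex mat" where
  "P \<epsilon> \<equiv> Dmat k \<beta> L * (1\<^sub>m N + complex_of_real \<epsilon> \<cdot>\<^sub>m map_mat complex_of_real W)"
abbreviation W_block :: "nat \<Rightarrow> nat \<Rightarrow> nat \<Rightarrow> real" where "W_block s i j \<equiv> W $$ (Npre L s + i, Npre L s + j)"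

lemma W_carrier: "W \<in> carrier_mat N N"
  using admissible by (simp add: admissible_def)

lemma W_sym: "i < N \<Longrightarrow> j < N \<Longrightarrow> W $$ (i,j) = W $$ (j,i)"
  using admissible W_carrier by (metis admissible_def carrier_matD index_transpose_mat(1))

lemma eventually_in_interval: "eventually (\<lambda>\<epsilon>. \<epsilon> \<in> {0<..<\<gamma>}) (at_right 0)"
  unfolding eventually_at_right_field using \<gamma> by auto

lemma eigen_equation:
  assumes e: "\<epsilon> \<in> {0<..<\<gamma>}" and l: "l < N" and i: "i < N"
  shows "ph (block_of L i) * (f \<epsilon> l $ i + complex_of_real \<epsilon> * (\<Sum>j<N. complex_of_real (W $$ (i,j)) * f \<epsilon> l $ j))
     = lam \<epsilon> l * f \<epsilon> l $ i"
proof -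
  have fc: "f \<epsilon> l \<in> carrier_vec N" and "P \<epsilon> *\<^sub>v f \<epsilon> l = lam \<epsilon> l \<cdot>\<^sub>v f \<epsilon> l"
    using eigvec e l by auto
  then have "(P \<epsilon> *\<^sub>v f \<epsilon> l) $ i = lam \<epsilon> l * f \<epsilon> l $ i" using i by simp
  then show ?thesis using Dmat_perturbation_mult_mat_vec_index[OF W_carrier fc i] by simp
qed

lemma sum_power2_f:
  assumes "\<epsilon> \<in> {0<..<\<gamma>}" "l < N"
  shows "(\<Sum>i<N. (cmod (f \<epsilon> l $ i))\<^sup>2) = 1"
proof -
  have "f \<epsilon> l \<in> carrier_vec N" "vnorm (f \<epsilon> l) = 1" using eigvec assms by auto
  then show ?thesis unfolding vnorm_def by simp
qed

lemma norm_f_le_1: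
  assumes "\<epsilon> \<in> {0<..<\<gamma>}" "l < N" "i < N"
  shows "cmod (f \<epsilon> l $ i) \<le> 1"
proof -
  have "(cmod (f \<epsilon> l $ i))\<^sup>2 \<le> 1"
    using member_le_sum[of i "{..<N}" "\<lambda>i. (cmod (f \<epsilon> l $ i))\<^sup>2"] sum_power2_f[OF assms(1,2)] assms(3)
    by simp
  then show ?thesis by (simp add: power_le_one_iff)
qed

lemma lam_inj: "\<epsilon> \<in> {0<..<\<gamma>} \<Longrightarrow> inj_on (lam \<epsilon>) {..<N}"
  using distinct_ev eigvec basis W_carrier
  by (intro eigenbasis_eigenvalues_inj[of "P \<epsilon>" N "f \<epsilon>"]) (auto simp: Dmat_def)

text \<open>On block \<open>t \<noteq> s\<close> the eigen-equation reads \<open>(\<lambda> - d\<^sub>i) f\<^sub>i = d\<^sub>i \<epsilon> (W f)\<^sub>i\<close>, and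
  \<open>\<lambda> - d\<^sub>i\<close> stays away from 0 because the phases are distinct.\<close>
lemma offblock_coordinate_tendsto_0:
  assumes s: "s < length L" and l: "l \<in> block L s" and i: "i < N" "i \<notin> block L s"
  shows "((\<lambda>\<epsilon>. f \<epsilon> l $ i) \<longlongrightarrow> 0) (at_right 0)"
proof -
  define t where "t = block_of L i"
  have t: "t < length L" "t \<noteq> s" using block_of[OF i(1)] i(2) by (auto simp: t_def)
  have lN: "l < N" using block_subset_lessThan[OF s] l by auto
  have gap: "ph s - ph t \<noteq> 0" using phase_distinct[OF s t(1)] t(2) by auto
  define K where "K = (\<Sum>j<N. \<bar>W $$ (i,j)\<bar>)"
  have lim_gap: "((\<lambda>\<epsilon>. cmod (lam \<epsilon> l - ph t)) \<longlongrightarrow> cmod (ph s - ph t)) (at_right 0)"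
    using lim s l by (intro tendsto_intros) auto
  then have "eventually (\<lambda>\<epsilon>. cmod (lam \<epsilon> l - ph t) > 0) (at_right 0)"
    using gap by (intro order_tendstoD(1)) auto
  then have upper: "eventually (\<lambda>\<epsilon>. cmod (f \<epsilon> l $ i) \<le> \<epsilon> * K / cmod (lam \<epsilon> l - ph t)) (at_right 0)"
    using eventually_in_interval
  proof eventually_elim
    case (elim \<epsilon>)
    define X where "X = (\<Sum>j<N. complex_of_real (W $$ (i,j)) * f \<epsilon> l $ j)"
    have "(lam \<epsilon> l - ph t) * f \<epsilon> l $ i = ph t * complex_of_real \<epsilon> * X"
      using eigen_equation[OF elim(2) lN i(1)] by (simp add: X_def t_def algebra_simps)
    then have "cmod ((lam \<epsilon> l - ph t) * f \<epsilon> l $ i) = cmod (ph t * complex_of_real \<epsilon> * X)"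
      by simp
    then have eq: "cmod (lam \<epsilon> l - ph t) * cmod (f \<epsilon> l $ i) = \<epsilon> * cmod X"
      using elim(2) by (simp only: norm_mult norm_phase norm_of_real) simp
    have "cmod X \<le> K"
    proof -
      have "cmod X \<le> (\<Sum>j<N. cmod (complex_of_real (W $$ (i,j)) * f \<epsilon> l $ j))"
        unfolding X_def by (rule norm_sum)
      also have "\<dots> \<le> K" unfolding K_def
        using norm_f_le_1[OF elim(2) lN] by (intro sum_mono) (auto simp: norm_mult mult_left_le)
      finally show ?thesis .
    qed
    then have "cmod (lam \<epsilon> l - ph t) * cmod (f \<epsilon> l $ i) \<le> \<epsilon> * K"
      unfolding eq using elim(2) by (intro mult_left_mono) auto
    then show ?case using elim(1) by (simp add: field_simps)
  qed
  have "((\<lambda>\<epsilon>. \<epsilon> * K / cmod (lam \<epsilon> l - ph t)) \<longlongrightarrow> 0 * K / cmod (ph s - ph t)) (at_right 0)"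
    using gap by (intro tendsto_intros lim_gap) auto
  then have "((\<lambda>\<epsilon>. \<epsilon> * K / cmod (lam \<epsilon> l - ph t)) \<longlongrightarrow> 0) (at_right 0)" by simp
  from tendsto_sandwich[OF _ upper tendsto_const this]
  have "((\<lambda>\<epsilon>. cmod (f \<epsilon> l $ i)) \<longlongrightarrow> 0) (at_right 0)" by simp
  then show ?thesis by (rule tendsto_norm_zero_cancel)
qed

text \<open>Dividing the eigen-equation on block \<open>s\<close> by \<open>\<epsilon> \<cdot> phase k \<beta> s\<close>, the residual of
  the restricted vector is minus its coupling to the other blocks.\<close>
lemma block_residual_tendsto_0:
  assumes s: "s < length L" and l: "l \<in> block L s" and j: "j < L ! s"
  shows "((\<lambda>\<epsilon>. (\<Sum>j'<L ! s. complex_of_real (W_block s j j') * f \<epsilon> l $ (Npre L s + j'))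
      - (lam \<epsilon> l - ph s) / (complex_of_real \<epsilon> * ph s) * f \<epsilon> l $ (Npre L s + j)) \<longlongrightarrow> 0) (at_right 0)"
proof -
  define off where "off = {..<N} - block L s"
  define I where "I = Npre L s + j"
  have lN: "l < N" using block_subset_lessThan[OF s] l by auto
  have I: "I < N" "block_of L I = s"
    using Npre_add_less[OF s j] block_of_eq[OF Npre_add_in_block[OF s j] s] by (auto simp: I_def)
  have coupling: "((\<lambda>\<epsilon>. - (\<Sum>i\<in>off. complex_of_real (W $$ (I, i)) * f \<epsilon> l $ i)) \<longlongrightarrow> - 0) (at_right 0)"
    by (intro tendsto_minus tendsto_null_sum tendsto_mult_right_zero offblock_coordinate_tendsto_0[OF s l])
      (auto simp: off_def)
  have "eventually (\<lambda>\<epsilon>. - (\<Sum>i\<in>off. complex_of_real (W $$ (I, i)) * f \<epsilon> l $ i)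
      = (\<Sum>j'<L ! s. complex_of_real (W_block s j j') * f \<epsilon> l $ (Npre L s + j'))
        - (lam \<epsilon> l - ph s) / (complex_of_real \<epsilon> * ph s) * f \<epsilon> l $ I) (at_right 0)"
    using eventually_in_interval
  proof eventually_elim
    case (elim \<epsilon>)
    define X where "X = (\<Sum>m<N. complex_of_real (W $$ (I,m)) * f \<epsilon> l $ m)"
    have "ph s * (f \<epsilon> l $ I + complex_of_real \<epsilon> * X) = lam \<epsilon> l * f \<epsilon> l $ I"
      using eigen_equation[OF elim lN I(1)] I(2) by (simp add: X_def)
    then have "X = (lam \<epsilon> l - ph s) / (complex_of_real \<epsilon> * ph s) * f \<epsilon> l $ I"
      using elim by (simp add: field_simps)
    moreover have "X = (\<Sum>j'<L ! s. complex_of_real (W_block s j j') * f \<epsilon> l $ (Npre L s + j'))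
        + (\<Sum>i\<in>off. complex_of_real (W $$ (I, i)) * f \<epsilon> l $ i)"
      unfolding X_def off_def I_def by (rule sum_lessThan_split_block[OF s])
    ultimately show ?case by (simp add: algebra_simps)
  qed
  from Lim_transform_eventually[OF coupling this] show ?thesis by (simp add: I_def)
qed

lemma block_mass_tendsto_1:
  assumes s: "s < length L" and l: "l \<in> block L s"
  shows "((\<lambda>\<epsilon>. \<Sum>j<L ! s. (cmod (f \<epsilon> l $ (Npre L s + j)))\<^sup>2) \<longlongrightarrow> 1) (at_right 0)"
proof -
  define off where "off = {..<N} - block L s"
  have lN: "l < N" using block_subset_lessThan[OF s] l by auto
  have mass: "((\<lambda>\<epsilon>. 1 - (\<Sum>i\<in>off. (cmod (f \<epsilon> l $ i))\<^sup>2)) \<longlongrightarrow> 1 - 0) (at_right 0)"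
    by (intro tendsto_diff tendsto_const tendsto_sum_power2_norm_zero offblock_coordinate_tendsto_0[OF s l])
      (auto simp: off_def)
  have "eventually (\<lambda>\<epsilon>. 1 - (\<Sum>i\<in>off. (cmod (f \<epsilon> l $ i))\<^sup>2)
      = (\<Sum>j<L ! s. (cmod (f \<epsilon> l $ (Npre L s + j)))\<^sup>2)) (at_right 0)"
    using eventually_in_interval
  proof eventually_elim
    case (elim \<epsilon>)
    show ?case
      using sum_power2_f[OF elim lN] sum_lessThan_split_block[OF s, of "\<lambda>i. (cmod (f \<epsilon> l $ i))\<^sup>2"]
      by (simp add: off_def)
  qed
  from Lim_transform_eventually[OF mass this] show ?thesis by simp
qed

lemma block_orthonormal_eigensystem:
  assumes s: "s < length L"
  obtains \<nu> r where "orthonormal_eigensystem (L ! s) (W_block s) \<nu> r" "\<And>q. q < L ! s \<Longrightarrow> \<nu> q \<le> 0"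
proof -
  have idx: "Wblock L W s $$ (i,j) = W_block s i j" if "i < L ! s" "j < L ! s" for i j
    using that by (simp add: Wblock_def)
  have "Wblock L W s \<in> carrier_mat (L ! s) (L ! s)" by (simp add: Wblock_def)
  moreover have "Wblock L W s $$ (i,j) = Wblock L W s $$ (j,i)" if "i < L ! s" "j < L ! s" for i j
    using that W_sym Npre_add_less[OF s] by (simp add: idx)
  moreover have "card {\<mu>. eigenvalue (Wblock L W s) \<mu>} = L ! s"
    using admissible s by (simp add: admissible_def)
  ultimately obtain \<nu> r where "orthonormal_eigensystem (L ! s) (\<lambda>i j. Wblock L W s $$ (i,j)) \<nu> r"
    using orthonormal_eigensystem_exists by blast
  then have sys: "orthonormal_eigensystem (L ! s) (W_block s) \<nu> r"
    by (simp add: orthonormal_eigensystem_def idx)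
  have "\<nu> q \<le> 0" if q: "q < L ! s" for q
  proof (rule principal_submatrix_eigenvalue_nonpos[of N W "Npre L s" "L ! s" "r q"])
    show "\<And>i j. i < N \<Longrightarrow> j < N \<Longrightarrow> i \<noteq> j \<Longrightarrow> 0 \<le> W $$ (i,j)"
      and "\<And>i. i < N \<Longrightarrow> (\<Sum>j<N. W $$ (i,j)) = 0"
      using admissible by (auto simp: admissible_def)
    show "Npre L s + L ! s \<le> N"
      using Npre_mono[of "Suc s" "length L" L] s by (simp add: Npre_Suc Npre_length)
    show "\<And>i. i < L ! s \<Longrightarrow> (\<Sum>j<L ! s. W_block s i j * r q j) = \<nu> q * r q i"
      using sys q by (simp add: orthonormal_eigensystem_def)
    have "(\<Sum>j<L ! s. r q j * r q j) = 1" using sys q by (simp add: orthonormal_eigensystem_def)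
    then show "\<exists>j<L ! s. r q j \<noteq> 0" by (metis (no_types, lifting) lessThan_iff mult_zero_left sum.neutral zero_neq_one)
  qed
  with sys that show thesis by blast
qed

lemma block_limit:
  assumes s: "s < length L" and l: "l \<in> block L s" and sys: "orthonormal_eigensystem (L ! s) (W_block s) \<nu> r"
  obtains q z where "q < L ! s"
    "((\<lambda>\<epsilon>. (lam \<epsilon> l - ph s) / (complex_of_real \<epsilon> * ph s)) \<longlongrightarrow> complex_of_real (\<nu> q)) (at_right 0)"
    "\<And>\<epsilon>. cmod (z \<epsilon>) = 1"
    "((\<lambda>\<epsilon>. \<Sum>j<L ! s. (cmod (f \<epsilon> l $ (Npre L s + j) - z \<epsilon> * complex_of_real (r q j)))\<^sup>2) \<longlongrightarrow> 0)
       (at_right 0)"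
proof -
  have sym: "W_block s i j = W_block s j i" if "i < L ! s" "j < L ! s" for i j
    using W_sym Npre_add_less[OF s] that by auto
  have "continuous_on {0<..<\<gamma>} (\<lambda>\<epsilon>. (lam \<epsilon> l - ph s) / (complex_of_real \<epsilon> * ph s))"
    using cont block_subset_lessThan[OF s] l by (intro continuous_intros) auto
  from approximate_eigenvector_limit[OF sys sym \<gamma> this block_residual_tendsto_0[OF s l]
      block_mass_tendsto_1[OF s l]]
  show thesis using that by blast
qed

lemma eigenvectors_weighted_orthogonal:
  assumes e: "\<epsilon> \<in> {0<..<\<gamma>}" and l: "l < N" and m: "m < N" and "l \<noteq> m"
  shows "(\<Sum>i<N. f \<epsilon> l $ i * f \<epsilon> m $ i / ph (block_of L i)) = 0"
proof (rule perturbed_diagonal_eigenvectors_orthogonal)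
  show "\<And>i j. i < N \<Longrightarrow> j < N \<Longrightarrow> complex_of_real (W $$ (i,j)) = complex_of_real (W $$ (j,i))"
    using W_sym by simp
  show "\<And>i. ph (block_of L i) \<noteq> 0" by simp
  show "\<And>i. i < N \<Longrightarrow> ph (block_of L i) * (f \<epsilon> l $ i + complex_of_real \<epsilon> *
      (\<Sum>j<N. complex_of_real (W $$ (i,j)) * f \<epsilon> l $ j)) = lam \<epsilon> l * f \<epsilon> l $ i"
    and "\<And>i. i < N \<Longrightarrow> ph (block_of L i) * (f \<epsilon> m $ i + complex_of_real \<epsilon> *
      (\<Sum>j<N. complex_of_real (W $$ (i,j)) * f \<epsilon> m $ j)) = lam \<epsilon> m * f \<epsilon> m $ i"
    using eigen_equation[OF e l] eigen_equation[OF e m] by auto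
  show "lam \<epsilon> l \<noteq> lam \<epsilon> m" using lam_inj[OF e] l m \<open>l \<noteq> m\<close> by (auto simp: inj_on_def)
qed

lemma offblock_products_tendsto_0:
  assumes s: "s < length L" and l: "l \<in> block L s" and m: "m < N"
  shows "((\<lambda>\<epsilon>. \<Sum>i\<in>{..<N} - block L s. f \<epsilon> m $ i * f \<epsilon> l $ i / ph (block_of L i)) \<longlongrightarrow> 0)
    (at_right 0)"
proof (rule tendsto_null_sum)
  fix i assume i: "i \<in> {..<N} - block L s"
  have "eventually (\<lambda>\<epsilon>. cmod (f \<epsilon> m $ i * f \<epsilon> l $ i / ph (block_of L i)) \<le> cmod (f \<epsilon> l $ i) * 1)
      (at_right 0)"
    using eventually_in_interval
    by eventually_elim (use norm_f_le_1 m i in \<open>auto simp: norm_mult norm_divide intro: mult_left_le_one_le\<close>)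
  from tendsto_0_le[OF offblock_coordinate_tendsto_0[OF s l] this] i
  show "((\<lambda>\<epsilon>. f \<epsilon> m $ i * f \<epsilon> l $ i / ph (block_of L i)) \<longlongrightarrow> 0) (at_right 0)" by simp
qed

text \<open>Two eigenvectors of \<open>P\<^sub>\<epsilon>\<close> from the same block cannot converge to the same eigenvector
  of \<open>W\<^sub>s\<close>: they are orthogonal for the bilinear form weighted by \<open>D\<close> inverse, whereas
  the common limit would have modulus 1 for that form.\<close>
lemma block_limits_distinct:
  assumes s: "s < length L" and l: "l \<in> block L s" and m: "m \<in> block L s" and "l \<noteq> m"
    and r: "(\<Sum>j<L ! s. r j * r j) = 1"
    and zl: "\<And>\<epsilon>. cmod (zl \<epsilon>) = 1"
    and fl: "((\<lambda>\<epsilon>. \<Sum>j<L ! s. (cmod (f \<epsilon> l $ (Npre L s + j) - zl \<epsilon> * complex_of_real (r j)))\<^sup>2) \<longlongrightarrow> 0)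
               (at_right 0)"
    and zm: "\<And>\<epsilon>. cmod (zm \<epsilon>) = 1"
    and fm: "((\<lambda>\<epsilon>. \<Sum>j<L ! s. (cmod (f \<epsilon> m $ (Npre L s + j) - zm \<epsilon> * complex_of_real (r j)))\<^sup>2) \<longlongrightarrow> 0)
               (at_right 0)"
  shows False
proof -
  define off where "off = {..<N} - block L s"
  define T where "T \<epsilon> = (\<Sum>j<L ! s. f \<epsilon> m $ (Npre L s + j) * f \<epsilon> l $ (Npre L s + j))" for \<epsilon>
  define Off where "Off \<epsilon> = (\<Sum>i\<in>off. f \<epsilon> m $ i * f \<epsilon> l $ i / ph (block_of L i))" for \<epsilon>
  have lN: "l < N" and mN: "m < N" using block_subset_lessThan[OF s] l m by auto
  have T: "((\<lambda>\<epsilon>. T \<epsilon> - zm \<epsilon> * zl \<epsilon>) \<longlongrightarrow> 0) (at_right 0)"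
    unfolding T_def
  proof (rule tendsto_sum_products_of_aligned[OF _ _ zm _ r])
    show "((\<lambda>\<epsilon>. f \<epsilon> m $ (Npre L s + j) - zm \<epsilon> * complex_of_real (r j)) \<longlongrightarrow> 0) (at_right 0)"
      and "((\<lambda>\<epsilon>. f \<epsilon> l $ (Npre L s + j) - zl \<epsilon> * complex_of_real (r j)) \<longlongrightarrow> 0) (at_right 0)"
      if "j < L ! s" for j
      using tendsto_norm_zero_of_sum_power2[OF fm that] tendsto_norm_zero_of_sum_power2[OF fl that] by auto
    show "eventually (\<lambda>\<epsilon>. \<forall>j<L ! s. cmod (f \<epsilon> l $ (Npre L s + j)) \<le> 1) (at_right 0)"
      using eventually_in_interval by eventually_elim (use norm_f_le_1 lN Npre_add_less[OF s] in auto)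
  qed
  have "(Off \<longlongrightarrow> 0) (at_right 0)"
    unfolding Off_def off_def by (rule offblock_products_tendsto_0[OF s l mN])
  then have "((\<lambda>\<epsilon>. - (ph s * Off \<epsilon>) - (T \<epsilon> - zm \<epsilon> * zl \<epsilon>)) \<longlongrightarrow> - (ph s * 0) - 0) (at_right 0)"
    by (intro tendsto_intros T)
  moreover have "eventually (\<lambda>\<epsilon>. - (ph s * Off \<epsilon>) - (T \<epsilon> - zm \<epsilon> * zl \<epsilon>) = zm \<epsilon> * zl \<epsilon>) (at_right 0)"
    using eventually_in_interval
  proof eventually_elim
    case (elim \<epsilon>)
    have "(\<Sum>i<N. f \<epsilon> l $ i * f \<epsilon> m $ i / ph (block_of L i)) = 0"
      by (rule eigenvectors_weighted_orthogonal[OF elim lN mN \<open>l \<noteq> m\<close>])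
    also have "(\<Sum>i<N. f \<epsilon> l $ i * f \<epsilon> m $ i / ph (block_of L i)) = T \<epsilon> / ph s + Off \<epsilon>"
      using block_of_eq[OF Npre_add_in_block[OF s] s]
      by (simp add: sum_lessThan_split_block[OF s] T_def Off_def off_def sum_divide_distrib mult.commute)
    finally have "T \<epsilon> = - (ph s * Off \<epsilon>)" by (simp add: field_simps eq_neg_iff_add_eq_0 mult.commute)
    then show ?case by simp
  qed
  ultimately have "((\<lambda>\<epsilon>. zm \<epsilon> * zl \<epsilon>) \<longlongrightarrow> 0) (at_right 0)"
    by (simp add: Lim_transform_eventually)
  then have "((\<lambda>\<epsilon>. cmod (zm \<epsilon> * zl \<epsilon>)) \<longlongrightarrow> 0) (at_right 0)" by (rule tendsto_norm_zero)
  then have "((\<lambda>\<epsilon>. 1::real) \<longlongrightarrow> 0) (at_right (0::real))" by (simp add: norm_mult zm zl)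
  then show False using tendsto_const_iff[OF trivial_limit_at_right_real] by (metis zero_neq_one)
qed

lemma cp_dist_tendsto_block_embed:
  assumes s: "s < length L" and l: "l \<in> block L s" and unit: "(\<Sum>j<L ! s. x j * x j) = 1"
    and z: "\<And>\<epsilon>. cmod (z \<epsilon>) = 1"
    and conv: "((\<lambda>\<epsilon>. \<Sum>j<L ! s. (cmod (f \<epsilon> l $ (Npre L s + j) - z \<epsilon> * complex_of_real (x j)))\<^sup>2) \<longlongrightarrow> 0)
                 (at_right 0)"
  shows "((\<lambda>\<epsilon>. cp_dist (f \<epsilon> l) (block_embed L s x)) \<longlongrightarrow> 0) (at_right 0)"
proof -
  define off where "off = {..<N} - block L s"
  have lN: "l < N" using block_subset_lessThan[OF s] l by auto
  define R where "R \<epsilon> = sqrt ((\<Sum>j<L ! s. (cmod (f \<epsilon> l $ (Npre L s + j) - z \<epsilon> * complex_of_real (x j)))\<^sup>2)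
      + (\<Sum>i\<in>off. (cmod (f \<epsilon> l $ i))\<^sup>2))" for \<epsilon>
  have "((\<lambda>\<epsilon>. \<Sum>i\<in>off. (cmod (f \<epsilon> l $ i))\<^sup>2) \<longlongrightarrow> 0) (at_right 0)"
    by (intro tendsto_sum_power2_norm_zero offblock_coordinate_tendsto_0[OF s l]) (auto simp: off_def)
  from tendsto_real_sqrt[OF tendsto_add[OF conv this]] have R: "(R \<longlongrightarrow> 0) (at_right 0)"
    by (simp add: R_def[abs_def])
  have "eventually (\<lambda>\<epsilon>. cp_dist (f \<epsilon> l) (block_embed L s x) \<le> R \<epsilon>) (at_right 0)"
    using eventually_in_interval
  proof eventually_elim
    case (elim \<epsilon>)
    have fc: "f \<epsilon> l \<in> carrier_vec N" and fn: "vnorm (f \<epsilon> l) = 1" using eigvec elim lN by auto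
    have "cp_dist (f \<epsilon> l) (block_embed L s x) \<le> vnorm (f \<epsilon> l - z \<epsilon> \<cdot>\<^sub>v block_embed L s x)"
      by (rule cp_dist_le_unit_multiple[OF fn vnorm_block_embed[OF s unit] z])
    also have "\<dots> = sqrt (\<Sum>i<N. (cmod (f \<epsilon> l $ i - z \<epsilon> * block_embed L s x $ i))\<^sup>2)"
      using fc by (simp add: vnorm_def block_embed_def)
    also have "(\<Sum>i<N. (cmod (f \<epsilon> l $ i - z \<epsilon> * block_embed L s x $ i))\<^sup>2)
        = (\<Sum>j<L ! s. (cmod (f \<epsilon> l $ (Npre L s + j) - z \<epsilon> * block_embed L s x $ (Npre L s + j)))\<^sup>2)
          + (\<Sum>i\<in>off. (cmod (f \<epsilon> l $ i - z \<epsilon> * block_embed L s x $ i))\<^sup>2)"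
      unfolding off_def by (rule sum_lessThan_split_block[OF s])
    also have "\<dots> = (\<Sum>j<L ! s. (cmod (f \<epsilon> l $ (Npre L s + j) - z \<epsilon> * complex_of_real (x j)))\<^sup>2)
          + (\<Sum>i\<in>off. (cmod (f \<epsilon> l $ i))\<^sup>2)"
      using block_embed_index_in[OF s] block_embed_index_out
      by (intro arg_cong2[where f = "(+)"] sum.cong) (auto simp: off_def)
    finally show ?case by (simp add: R_def)
  qed
  from tendsto_sandwich[OF _ this tendsto_const R] show ?thesis by (simp add: cp_dist_nonneg)
qed



lemma limit_eigendata:
  obtains \<nu> r q z where
    "\<And>s. s < length L \<Longrightarrow> orthonormal_eigensystem (L ! s) (W_block s) (\<nu> s) (r s)"
    "\<And>s p. s < length L \<Longrightarrow> p < L ! s \<Longrightarrow> \<nu> s p \<le> 0"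
    "\<And>l. l < N \<Longrightarrow> q l < L ! block_of L l"
    "\<And>l. l < N \<Longrightarrow> ((\<lambda>\<epsilon>. (lam \<epsilon> l - ph (block_of L l)) / (complex_of_real \<epsilon> * ph (block_of L l)))
        \<longlongrightarrow> complex_of_real (\<nu> (block_of L l) (q l))) (at_right 0)"
    "\<And>l \<epsilon>. l < N \<Longrightarrow> cmod (z l \<epsilon>) = 1"
    "\<And>l. l < N \<Longrightarrow> ((\<lambda>\<epsilon>. \<Sum>j<L ! block_of L l. (cmod (f \<epsilon> l $ (Npre L (block_of L l) + j)
        - z l \<epsilon> * complex_of_real (r (block_of L l) (q l) j)))\<^sup>2) \<longlongrightarrow> 0) (at_right 0)"
proof -
  define good_block where "good_block s \<nu> r \<longleftrightarrow>
      orthonormal_eigensystem (L ! s) (W_block s) \<nu> r \<and> (\<forall>p<L ! s. \<nu> p \<le> (0::real))" for s \<nu> r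
  have "\<forall>s. \<exists>\<nu> r. s < length L \<longrightarrow> good_block s \<nu> r"
    using block_orthonormal_eigensystem unfolding good_block_def by metis
  then obtain \<nu> r where \<nu>r: "\<And>s. s < length L \<Longrightarrow> good_block s (\<nu> s) (r s)"
    by (metis choice)
  define good_limit where "good_limit l q z \<longleftrightarrow> q < L ! block_of L l \<and>
      ((\<lambda>\<epsilon>. (lam \<epsilon> l - ph (block_of L l)) / (complex_of_real \<epsilon> * ph (block_of L l)))
        \<longlongrightarrow> complex_of_real (\<nu> (block_of L l) q)) (at_right 0) \<and> (\<forall>\<epsilon>. cmod (z \<epsilon>) = 1) \<and>
      ((\<lambda>\<epsilon>. \<Sum>j<L ! block_of L l. (cmod (f \<epsilon> l $ (Npre L (block_of L l) + j)
        - z \<epsilon> * complex_of_real (r (block_of L l) q j)))\<^sup>2) \<longlongrightarrow> 0) (at_right 0)" for l q z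
  have "\<forall>l. \<exists>q z. l < N \<longrightarrow> good_limit l q z"
  proof (intro allI)
    fix l
    show "\<exists>q z. l < N \<longrightarrow> good_limit l q z"
    proof (cases "l < N")
      case True
      then have b: "block_of L l < length L" "l \<in> block L (block_of L l)" using block_of by auto
      have "orthonormal_eigensystem (L ! block_of L l) (W_block (block_of L l)) (\<nu> (block_of L l)) (r (block_of L l))"
        using \<nu>r[OF b(1)] by (simp add: good_block_def)
      from block_limit[OF b this] show ?thesis unfolding good_limit_def by blast
    qed simp
  qed
  then obtain q z where "\<And>l. l < N \<Longrightarrow> good_limit l (q l) (z l)"
    by (metis choice)
  with \<nu>r that show thesis unfolding good_block_def good_limit_def by blast
qed

lemma perturbed_eigenbasis_limit:
  "\<exists>g lh. (\<forall>l < N. g l \<in> carrier_vec N \<and>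
              (Dmat k \<beta> L * map_mat complex_of_real (WhatL L W)) *\<^sub>v g l = lh l \<cdot>\<^sub>v g l) \<and>
     (\<forall>l < N. \<forall>m < N. g l \<bullet>c g m = (if l = m then 1 else 0)) \<and>
     (\<forall>l < N. ((\<lambda>\<epsilon>. cp_dist (f \<epsilon> l) (g l)) \<longlongrightarrow> 0) (at_right 0)) \<and>
     (\<forall>s < length L. \<forall>l \<in> block L s.
        (\<lambda>\<epsilon>. lam \<epsilon> l - ph s - complex_of_real \<epsilon> * lh l) \<in> o[at_right 0](\<lambda>\<epsilon>. complex_of_real \<epsilon>) \<and>
        (lh l \<noteq> 0 \<longrightarrow> (\<exists>m::int. Arg (lh l) = Arg (ph s) + pi + 2 * pi * of_int m)))"
proof -
  obtain \<nu> r q z where sys: "\<And>s. s < length L \<Longrightarrow> orthonormal_eigensystem (L ! s) (W_block s) (\<nu> s) (r s)"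
    and neg: "\<And>s p. s < length L \<Longrightarrow> p < L ! s \<Longrightarrow> \<nu> s p \<le> 0"
    and q: "\<And>l. l < N \<Longrightarrow> q l < L ! block_of L l"
    and q_lim: "\<And>l. l < N \<Longrightarrow> ((\<lambda>\<epsilon>. (lam \<epsilon> l - ph (block_of L l)) / (complex_of_real \<epsilon> * ph (block_of L l)))
        \<longlongrightarrow> complex_of_real (\<nu> (block_of L l) (q l))) (at_right 0)"
    and z: "\<And>l \<epsilon>. l < N \<Longrightarrow> cmod (z l \<epsilon>) = 1"
    and z_conv: "\<And>l. l < N \<Longrightarrow> ((\<lambda>\<epsilon>. \<Sum>j<L ! block_of L l. (cmod (f \<epsilon> l $ (Npre L (block_of L l) + j)
        - z l \<epsilon> * complex_of_real (r (block_of L l) (q l) j)))\<^sup>2) \<longlongrightarrow> 0) (at_right 0)"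
    using limit_eigendata by blast
  let ?b = "block_of L"
  define g where "g l = block_embed L (?b l) (r (?b l) (q l))" for l
  define lh where "lh l = ph (?b l) * complex_of_real (\<nu> (?b l) (q l))" for l
  have b: "?b l < length L" "l \<in> block L (?b l)" if "l < N" for l using block_of[OF that] by auto
  have unit: "(\<Sum>j<L ! ?b l. r (?b l) (q l) j * r (?b l) (q l) j) = 1" if "l < N" for l
    using sys[OF b(1)[OF that]] q[OF that] by (simp add: orthonormal_eigensystem_def)
  have q_inj: "q l \<noteq> q m" if lm: "l < N" "m < N" "?b l = ?b m" "l \<noteq> m" for l m
  proof
    assume "q l = q m"
    then have conv_m: "((\<lambda>\<epsilon>. \<Sum>j<L ! ?b l. (cmod (f \<epsilon> m $ (Npre L (?b l) + j)
        - z m \<epsilon> * complex_of_real (r (?b l) (q l) j)))\<^sup>2) \<longlongrightarrow> 0) (at_right 0)"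
      using z_conv[OF lm(2)] lm(3) by simp
    have "m \<in> block L (?b l)" using b(2)[OF lm(2)] lm(3) by simp
    then show False
      using block_limits_distinct[OF b[OF lm(1)] _ lm(4) unit[OF lm(1)] z[OF lm(1)] z_conv[OF lm(1)]
          z[OF lm(2)] conv_m] by blast
  qed
  note eigenbasis = block_embed_orthonormal_eigenbasis[OF sys q q_inj]
  have conv: "((\<lambda>\<epsilon>. cp_dist (f \<epsilon> l) (g l)) \<longlongrightarrow> 0) (at_right 0)" if "l < N" for l
    unfolding g_def by (rule cp_dist_tendsto_block_embed[OF b[OF that] unit[OF that] z[OF that] z_conv[OF that]])
  have expansion: "(\<lambda>\<epsilon>. lam \<epsilon> l - ph s - complex_of_real \<epsilon> * lh l) \<in> o[at_right 0](\<lambda>\<epsilon>. complex_of_real \<epsilon>) \<and>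
      (lh l \<noteq> 0 \<longrightarrow> (\<exists>m::int. Arg (lh l) = Arg (ph s) + pi + 2 * pi * of_int m))"
    if s: "s < length L" and l: "l \<in> block L s" for s l
  proof -
    have lN: "l < N" and bs: "?b l = s" using block_subset_lessThan[OF s] l block_of_eq[OF l s] by auto
    show ?thesis
      using first_order_expansion[OF q_lim[OF lN] phase_nonzero neg[OF b(1)[OF lN] q[OF lN]]]
      by (simp add: lh_def bs)
  qed
  show ?thesis
  proof (intro exI[of _ g] exI[of _ lh] conjI)
    show "\<forall>l < N. g l \<in> carrier_vec N \<and>
        (Dmat k \<beta> L * map_mat complex_of_real (WhatL L W)) *\<^sub>v g l = lh l \<cdot>\<^sub>v g l"
      using eigenbasis(1) unfolding g_def lh_def by blast
    show "\<forall>l < N. \<forall>m < N. g l \<bullet>c g m = (if l = m then 1 else 0)"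
      using eigenbasis(2) unfolding g_def by blast
    show "\<forall>l < N. ((\<lambda>\<epsilon>. cp_dist (f \<epsilon> l) (g l)) \<longlongrightarrow> 0) (at_right 0)"
      using conv by blast
  qed (use expansion in blast)
qed

end

theorem theorem4p2:
  fixes L :: "nat list" and W :: "real mat" and k :: nat and \<beta> :: "nat \<Rightarrow> real"
    and \<gamma> :: real
    and f :: "real \<Rightarrow> nat \<Rightarrow> complex vec" and lam :: "real \<Rightarrow> nat \<Rightarrow> complex"
  defines "N \<equiv> sum_list L" and "S \<equiv> length L"
  defines "D \<equiv> Dmat (int k) \<beta> L"
  defines "P \<equiv> (\<lambda>\<epsilon>::real. D * (1\<^sub>m N + complex_of_real \<epsilon> \<cdot>\<^sub>m map_mat complex_of_real W))"
  defines "Phat \<equiv> D * map_mat complex_of_real (WhatL L W)"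
  assumes L: "bandwidth_vector L" and S: "1 < S" "S \<le> N"
    and W: "admissible L W"
    and k: "k > 0"
    and \<beta>: "\<beta> \<in> Gamma S"
    and \<gamma>: "\<gamma> > 0"
    and distinct_ev: "\<forall>\<epsilon> \<in> {0<..<\<gamma>}. card {\<mu>. eigenvalue (P \<epsilon>) \<mu>} = N"
    and eigvec: "\<forall>\<epsilon> \<in> {0<..<\<gamma>}. \<forall>l < N. f \<epsilon> l \<in> carrier_vec N \<and> vnorm (f \<epsilon> l) = 1
                   \<and> P \<epsilon> *\<^sub>v f \<epsilon> l = lam \<epsilon> l \<cdot>\<^sub>v f \<epsilon> l"
    and basis: "\<forall>\<epsilon> \<in> {0<..<\<gamma>}. \<forall>v \<in> carrier_vec N. \<exists>c :: nat \<Rightarrow> complex.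
                   v = vec N (\<lambda>i. \<Sum>l < N. c l * (f \<epsilon> l $ i))"
    and cont: "\<forall>l < N. continuous_on {0<..<\<gamma>} (\<lambda>\<epsilon>. lam \<epsilon> l)"
    and lim: "\<forall>s < S. \<forall>l \<in> block L s. ((\<lambda>\<epsilon>. lam \<epsilon> l) \<longlongrightarrow> phase (int k) \<beta> s) (at_right 0)"
  shows "\<exists>g :: nat \<Rightarrow> complex vec. \<exists>lh :: nat \<Rightarrow> complex.
           (\<forall>l < N. g l \<in> carrier_vec N \<and> Phat *\<^sub>v g l = lh l \<cdot>\<^sub>v g l) \<and>
           (\<forall>l < N. \<forall>m < N. g l \<bullet>c g m = (if l = m then 1 else 0)) \<and>
           (\<forall>l < N. ((\<lambda>\<epsilon>. cp_dist (f \<epsilon> l) (g l)) \<longlongrightarrow> 0) (at_right 0)) \<and>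
           (\<forall>s < S. \<forall>l \<in> block L s.
              (\<lambda>\<epsilon>. lam \<epsilon> l - phase (int k) \<beta> s - complex_of_real \<epsilon> * lh l)
                \<in> o[at_right 0](\<lambda>\<epsilon>. complex_of_real \<epsilon>) \<and>
              (lh l \<noteq> 0 \<longrightarrow> (\<exists>m::int. Arg (lh l) = Arg (phase (int k) \<beta> s) + pi + 2 * pi * of_int m)))"
proof -
  interpret block_perturbation L W "int k" \<beta> \<gamma> f lam
  proof unfold_locales
    show "phase (int k) \<beta> s \<noteq> phase (int k) \<beta> t" if "s < length L" "t < length L" "s \<noteq> t" for s t
      using \<beta> k that by (auto simp: Gamma_def S_def)
  qed (use assms in \<open>simp_all only: N_def S_def P_def D_def\<close>)
  show ?thesis
    using perturbed_eigenbasis_limit unfolding N_def S_def Phat_def D_def by simp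
qed

end
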